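(* Let $P$ be a poset such that the interval monoid $\mathcal{M}(P)$ is a gcd-monoid, and let $[u,v]$ be an extreme spindle of $P$. Then the category $\mathcal{C}(P,u,v)$ is a gcd-category, and its universal monoid $\mathcal{M}(P,u,v)=\mathrm{U_{mon}}(\mathcal{C}(P,u,v))$ is a gcd-monoid.
   Context: For a poset $P$, $\mathcal{M}(P)$ is the monoid presented by generators $[x,y]$ ($x\le y$) and relations $[x,x]=1$, $[x,z]=[x,y][y,z]$ for $x\le y\le z$. A closed interval $[u,v]$ with $u<v$, containing some $z$ with $u<z<v$, is a spindle if the comparability relation on the open interval $\{x:u<x<v\}$ is an equivalence relation; it is an extreme spindle if moreover $u$ is minimal and $v$ is maximal in $P$. Let $\mathcal{C}_{u,v}$ be the set of maximal chains of $[u,v]$. The category $\mathcal{C}(P,u,v)$ (arrow-only, identities $[x,x]$ for $x\in P$) has underlying set $\{[x,y]: x\le y \text{ in } P,\ (x,y)\ne(u,v)\}\cup\mathcal{C}_{u,v}$, where each $Z\in\mathcal{C}_{u,v}$ has source $[u,u]$ and target $[v,v]$, and the only defined products are: $[u,u]\cdot Z=Z\cdot[v,v]=Z$ for $Z\in\mathcal{C}_{u,v}$; $[x,y]\cdot[y,z]=[x,z]$ whenever $x\le y\le z$ and $(x,z)\ne(u,v)$; $[u,z]\cdot[z,v]=Z$ whenever $u<z<v$ and $Z$ is the maximal chain of $[u,v]$ containing $z$. For a category $S$ (arrow-only), $\mathrm{U_{mon}}(S)$ is the monoid presented by generators $\varepsilon(x)$, $x\in S$, relations $\varepsilon(e)=1$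 for identities and $\varepsilon(x)\varepsilon(y)=\varepsilon(xy)$ whenever $xy$ is defined. Left/right divisibility in $C$: $a\leqslant b$ iff $b=ax$, $a\mathbin{\widetilde\leqslant}b$ iff $b=xa$. A category is conical if $xy$ being an identity forces $x$ to be an identity. A gcd-category is a conical, left and right cancellative category in which any two elements with the same source have a greatest lower bound for $\leqslant$ and any two with the same target have a greatest lower bound for $\mathbin{\widetilde\leqslant}$; a gcd-monoid is a gcd-category with one identity. *)

theory Defs
  imports Main
begin

text \<open>An (arrow-only) category: a set of arrows, source and target maps
(sending an arrow to the identity arrow at its source/target), and a
composition which is meaningful exactly on pairs with tgt x = src y.\<close>

record 'c cat =
  arr :: "'c set"
  src :: "'c \<Rightarrow> 'c"
  tgt :: "'c \<Rightarrow> 'c"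
  cmp :: "'c \<Rightarrow> 'c \<Rightarrow> 'c"

definition composable :: "'c cat \<Rightarrow> 'c \<Rightarrow> 'c \<Rightarrow> bool" where
  "composable C x y \<longleftrightarrow> x \<in> arr C \<and> y \<in> arr C \<and> tgt C x = src C y"

definition is_identity :: "'c cat \<Rightarrow> 'c \<Rightarrow> bool" where
  "is_identity C e \<longleftrightarrow> e \<in> arr C \<and> src C e = e"

definition category :: "'c cat \<Rightarrow> bool" where
  "category C \<longleftrightarrow>
     (\<forall>x\<in>arr C. src C x \<in> arr C \<and> tgt C x \<in> arr C
        \<and> src C (src C x) = src C x \<and> tgt C (src C x) = src C x
        \<and> src C (tgt C x) = tgt C x \<and> tgt C (tgt C x) = tgt C x
        \<and> cmp C (src C x) x = x \<and> cmp C x (tgt C x) = x)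
   \<and> (\<forall>x y. composable C x y \<longrightarrow>
        cmp C x y \<in> arr C \<and> src C (cmp C x y) = src C x \<and> tgt C (cmp C x y) = tgt C y)
   \<and> (\<forall>x y z. composable C x y \<and> composable C y z \<longrightarrow>
        cmp C (cmp C x y) z = cmp C x (cmp C y z))"

definition ldiv :: "'c cat \<Rightarrow> 'c \<Rightarrow> 'c \<Rightarrow> bool" where
  "ldiv C a b \<longleftrightarrow> (\<exists>x. composable C a x \<and> b = cmp C a x)"

definition rdiv :: "'c cat \<Rightarrow> 'c \<Rightarrow> 'c \<Rightarrow> bool" where
  "rdiv C a b \<longleftrightarrow> (\<exists>x. composable C x a \<and> b = cmp C x a)"

definition conical :: "'c cat \<Rightarrow> bool" where
  "conical C \<longleftrightarrow> (\<forall>x y. composable C x y \<and> is_identity C (cmp C x y) \<longrightarrow> is_identity C x)"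

definition left_cancellative :: "'c cat \<Rightarrow> bool" where
  "left_cancellative C \<longleftrightarrow>
     (\<forall>a x y. composable C a x \<and> composable C a y \<and> cmp C a x = cmp C a y \<longrightarrow> x = y)"

definition right_cancellative :: "'c cat \<Rightarrow> bool" where
  "right_cancellative C \<longleftrightarrow>
     (\<forall>a x y. composable C x a \<and> composable C y a \<and> cmp C x a = cmp C y a \<longrightarrow> x = y)"

definition has_left_gcds :: "'c cat \<Rightarrow> bool" where
  "has_left_gcds C \<longleftrightarrow>
     (\<forall>a\<in>arr C. \<forall>b\<in>arr C. src C a = src C b \<longrightarrow>
        (\<exists>d\<in>arr C. ldiv C d a \<and> ldiv C d b \<and>
            (\<forall>c\<in>arr C. ldiv C c a \<and> ldiv C c b \<longrightarrow> ldiv C c d)))"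

definition has_right_gcds :: "'c cat \<Rightarrow> bool" where
  "has_right_gcds C \<longleftrightarrow>
     (\<forall>a\<in>arr C. \<forall>b\<in>arr C. tgt C a = tgt C b \<longrightarrow>
        (\<exists>d\<in>arr C. rdiv C d a \<and> rdiv C d b \<and>
            (\<forall>c\<in>arr C. rdiv C c a \<and> rdiv C c b \<longrightarrow> rdiv C c d)))"

definition gcd_category :: "'c cat \<Rightarrow> bool" where
  "gcd_category C \<longleftrightarrow> category C \<and> conical C \<and> left_cancellative C \<and> right_cancellative C
      \<and> has_left_gcds C \<and> has_right_gcds C"

definition gcd_monoid :: "'c cat \<Rightarrow> bool" where
  "gcd_monoid C \<longleftrightarrow> gcd_category C \<and> (\<exists>!e. is_identity C e)"

inductive pcong :: "('g list \<times> 'g list) set \<Rightarrow> 'g list \<Rightarrow> 'g list \<Rightarrow> bool" for R where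
  refl: "pcong R xs xs"
| sym: "pcong R xs ys \<Longrightarrow> pcong R ys xs"
| trans: "pcong R xs ys \<Longrightarrow> pcong R ys zs \<Longrightarrow> pcong R xs zs"
| rel: "(l, r) \<in> R \<Longrightarrow> pcong R (xs @ l @ ys) (xs @ r @ ys)"

definition pclass :: "('g list \<times> 'g list) set \<Rightarrow> 'g list \<Rightarrow> 'g list set" where
  "pclass R xs = {ys. pcong R xs ys}"

text \<open>The monoid presented by generators G and relations R, viewed as a
one-object category whose elements are congruence classes of words.\<close>

definition pres_monoid :: "'g set \<Rightarrow> ('g list \<times> 'g list) set \<Rightarrow> 'g list set cat" where
  "pres_monoid G R =
     \<lparr> arr = {pclass R xs | xs. xs \<in> lists G},
       src = (\<lambda>_. pclass R []),
       tgt = (\<lambda>_. pclass R []),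
       cmp = (\<lambda>X Y. {zs. \<exists>xs\<in>X. \<exists>ys\<in>Y. pcong R (xs @ ys) zs}) \<rparr>"

definition interval_monoid :: "'a::order set \<Rightarrow> ('a \<times> 'a) list set cat" where
  "interval_monoid P =
     pres_monoid {(x, y). x \<in> P \<and> y \<in> P \<and> x \<le> y}
       ({([(x, x)], []) | x. x \<in> P} \<union>
        {([(x, z)], [(x, y), (y, z)]) | x y z. x \<in> P \<and> y \<in> P \<and> z \<in> P \<and> x \<le> y \<and> y \<le> z})"

definition spindle :: "'a::order set \<Rightarrow> 'a \<Rightarrow> 'a \<Rightarrow> bool" where
  "spindle P u v \<longleftrightarrow> u \<in> P \<and> v \<in> P \<and> u < v \<and> (\<exists>z\<in>P. u < z \<and> z < v) \<and>
     (let I = {x\<in>P. u < x \<and> x < v} in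
        equiv I {(a, b). a \<in> I \<and> b \<in> I \<and> (a \<le> b \<or> b \<le> a)})"

definition extreme_spindle :: "'a::order set \<Rightarrow> 'a \<Rightarrow> 'a \<Rightarrow> bool" where
  "extreme_spindle P u v \<longleftrightarrow> spindle P u v \<and>
     (\<forall>x\<in>P. x \<le> u \<longrightarrow> x = u) \<and> (\<forall>x\<in>P. v \<le> x \<longrightarrow> x = v)"

definition is_chain :: "'a::order set \<Rightarrow> bool" where
  "is_chain Z \<longleftrightarrow> (\<forall>a\<in>Z. \<forall>b\<in>Z. a \<le> b \<or> b \<le> a)"

definition max_chains :: "'a::order set \<Rightarrow> 'a \<Rightarrow> 'a \<Rightarrow> 'a set set" where
  "max_chains P u v = {Z. Z \<subseteq> {x\<in>P. u \<le> x \<and> x \<le> v} \<and> is_chain Z \<and>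
      (\<forall>W. W \<subseteq> {x\<in>P. u \<le> x \<and> x \<le> v} \<and> is_chain W \<and> Z \<subseteq> W \<longrightarrow> W = Z)}"

datatype 'a celt = Iv 'a 'a | Ch "'a set"

fun cpuv_src :: "'a \<Rightarrow> 'a celt \<Rightarrow> 'a celt" where
  "cpuv_src u (Iv x y) = Iv x x"
| "cpuv_src u (Ch Z) = Iv u u"

fun cpuv_tgt :: "'a \<Rightarrow> 'a celt \<Rightarrow> 'a celt" where
  "cpuv_tgt v (Iv x y) = Iv y y"
| "cpuv_tgt v (Ch Z) = Iv v v"

text \<open>Composition (only meaningful on composable pairs).\<close>

fun cpuv_cmp :: "'a::order set \<Rightarrow> 'a \<Rightarrow> 'a \<Rightarrow> 'a celt \<Rightarrow> 'a celt \<Rightarrow> 'a celt" where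
  "cpuv_cmp P u v (Iv x y) (Iv y' z) =
     (if x = u \<and> z = v then Ch (THE Z. Z \<in> max_chains P u v \<and> y \<in> Z) else Iv x z)"
| "cpuv_cmp P u v (Iv x y) (Ch Z) = Ch Z"
| "cpuv_cmp P u v (Ch Z) (Iv x y) = Ch Z"
| "cpuv_cmp P u v (Ch Z) (Ch W) = Ch Z"

definition Cpuv :: "'a::order set \<Rightarrow> 'a \<Rightarrow> 'a \<Rightarrow> 'a celt cat" where
  "Cpuv P u v =
     \<lparr> arr = {Iv x y | x y. x \<in> P \<and> y \<in> P \<and> x \<le> y \<and> (x, y) \<noteq> (u, v)} \<union> Ch ` max_chains P u v,
       src = cpuv_src u,
       tgt = cpuv_tgt v,
       cmp = cpuv_cmp P u v \<rparr>"

definition umon :: "'c cat \<Rightarrow> 'c list set cat" where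
  "umon S = pres_monoid (arr S)
     ({([e], []) | e. is_identity S e} \<union>
      {([x, y], [cmp S x y]) | x y. composable S x y})"

end

theory Submission
  imports Defs
begin

text \<open>The universal monoid of a conical category is described by normal forms: every word
  reduces to a unique word without identities and without composable adjacent letters. On
  normal forms, a left divisor is a prefix whose last letter may be replaced by a left divisor
  of the corresponding letter, so left cancellativity and left gcds pass from the category to
  its universal monoid and back; the right-hand statements follow by passing to the opposite
  category. Applied to a poset viewed as a category, whose universal monoid is the interval
  monoid, this yields meets and joins inside the intervals of \<open>P\<close>.

  In an extreme spindle \<open>[u,v]\<close> the maximal chains are the comparability classes of the open
  interval with \<open>u\<close> and \<open>v\<close> added, and two distinct ones meet only in \<open>{u, v}\<close>. Hence the
  new arrows of \<open>C(P,u,v)\<close> compose, cancel and have gcds computed from meets and joins in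
  \<open>P\<close>, so \<open>C(P,u,v)\<close> is a gcd-category and its universal monoid a gcd-monoid.\<close>

lemma pcong_append_context: "pcong R xs ys \<Longrightarrow> pcong R (as @ xs @ bs) (as @ ys @ bs)"
proof (induction rule: pcong.induct)
  case (rel l r xs ys)
  from pcong.rel[OF rel, of "as @ xs" "ys @ bs"] show ?case by simp
qed (auto intro: pcong.intros)

lemma pcong_append: "pcong R a a' \<Longrightarrow> pcong R b b' \<Longrightarrow> pcong R (a @ b) (a' @ b')"
  using pcong_append_context[of R a a' "[]" b] pcong_append_context[of R b b' a' "[]"]
  by (auto intro: pcong.trans)

lemma pcong_of_rel: "(l, r) \<in> R \<Longrightarrow> pcong R l r"
  using pcong.rel[of l r R "[]" "[]"] by simp

lemma pcong_mono:
  assumes "\<And>l r. (l, r) \<in> R \<Longrightarrow> pcong S l r"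
  shows "pcong R xs ys \<Longrightarrow> pcong S xs ys"
proof (induction rule: pcong.induct)
  case (rel l r xs ys)
  then show ?case by (intro pcong_append_context assms)
qed (auto intro: pcong.intros)

lemma pclass_eq_iff: "pclass R xs = pclass R ys \<longleftrightarrow> pcong R xs ys"
  unfolding pclass_def by (auto intro: pcong.refl pcong.sym pcong.trans)

lemma pres_monoid_simps:
  "arr (pres_monoid G R) = pclass R ` lists G"
  "src (pres_monoid G R) X = pclass R []"
  "tgt (pres_monoid G R) X = pclass R []"
  by (auto simp: pres_monoid_def)

lemma pres_monoid_cmp: "cmp (pres_monoid G R) (pclass R xs) (pclass R ys) = pclass R (xs @ ys)"
  by (auto simp: pres_monoid_def pclass_def intro: pcong.refl pcong.trans pcong_append)

lemma pres_monoid_all_arr: "(\<forall>X\<in>arr (pres_monoid G R). Q X) \<longleftrightarrow> (\<forall>xs\<in>lists G. Q (pclass R xs))"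
  by (simp add: pres_monoid_simps)

lemma pres_monoid_composable:
  "composable (pres_monoid G R) X Y \<longleftrightarrow> X \<in> arr (pres_monoid G R) \<and> Y \<in> arr (pres_monoid G R)"
  by (simp add: composable_def pres_monoid_simps)

lemma category_pres_monoid: "category (pres_monoid G R)"
  unfolding category_def pres_monoid_composable
  by (auto simp: pres_monoid_simps pres_monoid_cmp intro!: imageI[of "[]"] imageI[of "_ @ _"])

lemma pres_monoid_is_identity: "is_identity (pres_monoid G R) e \<longleftrightarrow> e = pclass R []"
  by (auto simp: is_identity_def pres_monoid_simps)

definition word_ldiv :: "('g list \<times> 'g list) set \<Rightarrow> 'g set \<Rightarrow> 'g list \<Rightarrow> 'g list \<Rightarrow> bool" where
  "word_ldiv R G a b \<longleftrightarrow> (\<exists>z\<in>lists G. pcong R (a @ z) b)"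

definition word_rdiv :: "('g list \<times> 'g list) set \<Rightarrow> 'g set \<Rightarrow> 'g list \<Rightarrow> 'g list \<Rightarrow> bool" where
  "word_rdiv R G a b \<longleftrightarrow> (\<exists>z\<in>lists G. pcong R (z @ a) b)"

lemma pres_monoid_ldiv_iff:
  assumes "xs \<in> lists G"
  shows "ldiv (pres_monoid G R) (pclass R xs) (pclass R ys) \<longleftrightarrow> word_ldiv R G xs ys"
proof -
  have "ldiv (pres_monoid G R) (pclass R xs) (pclass R ys) \<longleftrightarrow>
      (\<exists>z\<in>lists G. pclass R ys = pclass R (xs @ z))"
    using assms by (auto simp: ldiv_def pres_monoid_composable pres_monoid_simps pres_monoid_cmp)
  then show ?thesis
    by (auto simp: word_ldiv_def pclass_eq_iff intro: pcong.sym)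
qed

lemma pres_monoid_rdiv_iff:
  assumes "xs \<in> lists G"
  shows "rdiv (pres_monoid G R) (pclass R xs) (pclass R ys) \<longleftrightarrow> word_rdiv R G xs ys"
proof -
  have "rdiv (pres_monoid G R) (pclass R xs) (pclass R ys) \<longleftrightarrow>
      (\<exists>z\<in>lists G. pclass R ys = pclass R (z @ xs))"
    using assms by (auto simp: rdiv_def pres_monoid_composable pres_monoid_simps pres_monoid_cmp)
  then show ?thesis
    by (auto simp: word_rdiv_def pclass_eq_iff intro: pcong.sym)
qed

lemma left_cancellative_pres_monoid_iff:
  "left_cancellative (pres_monoid G R) \<longleftrightarrow>
    (\<forall>a\<in>lists G. \<forall>x\<in>lists G. \<forall>y\<in>lists G. pcong R (a @ x) (a @ y) \<longrightarrow> pcong R x y)"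
proof -
  have "left_cancellative (pres_monoid G R) \<longleftrightarrow> (\<forall>A\<in>arr (pres_monoid G R). \<forall>X\<in>arr (pres_monoid G R).
      \<forall>Y\<in>arr (pres_monoid G R). cmp (pres_monoid G R) A X = cmp (pres_monoid G R) A Y \<longrightarrow> X = Y)"
    unfolding left_cancellative_def pres_monoid_composable by blast
  then show ?thesis
    by (simp add: pres_monoid_all_arr pres_monoid_cmp pclass_eq_iff)
qed

lemma right_cancellative_pres_monoid_iff:
  "right_cancellative (pres_monoid G R) \<longleftrightarrow>
    (\<forall>a\<in>lists G. \<forall>x\<in>lists G. \<forall>y\<in>lists G. pcong R (x @ a) (y @ a) \<longrightarrow> pcong R x y)"
proof -
  have "right_cancellative (pres_monoid G R) \<longleftrightarrow> (\<forall>A\<in>arr (pres_monoid G R). \<forall>X\<in>arr (pres_monoid G R).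
      \<forall>Y\<in>arr (pres_monoid G R). cmp (pres_monoid G R) X A = cmp (pres_monoid G R) Y A \<longrightarrow> X = Y)"
    unfolding right_cancellative_def pres_monoid_composable by blast
  then show ?thesis
    by (simp add: pres_monoid_all_arr pres_monoid_cmp pclass_eq_iff)
qed

definition is_glb :: "'a set \<Rightarrow> ('a \<Rightarrow> 'a \<Rightarrow> bool) \<Rightarrow> 'a \<Rightarrow> 'a \<Rightarrow> 'a \<Rightarrow> bool" where
  "is_glb A r a b d \<longleftrightarrow> d \<in> A \<and> r d a \<and> r d b \<and> (\<forall>c\<in>A. r c a \<and> r c b \<longrightarrow> r c d)"

lemma is_glbI:
  "d \<in> A \<Longrightarrow> r d a \<Longrightarrow> r d b \<Longrightarrow> (\<And>c. c \<in> A \<Longrightarrow> r c a \<Longrightarrow> r c b \<Longrightarrow> r c d) \<Longrightarrow> is_glb A r a b d"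
  unfolding is_glb_def by blast

lemma is_glb_commute: "is_glb A r a b d \<longleftrightarrow> is_glb A r b a d"
  unfolding is_glb_def by blast

lemma has_left_gcds_iff_is_glb:
  "has_left_gcds C \<longleftrightarrow>
    (\<forall>a\<in>arr C. \<forall>b\<in>arr C. src C a = src C b \<longrightarrow> (\<exists>d. is_glb (arr C) (ldiv C) a b d))"
  unfolding has_left_gcds_def is_glb_def by blast

lemma has_right_gcds_iff_is_glb:
  "has_right_gcds C \<longleftrightarrow>
    (\<forall>a\<in>arr C. \<forall>b\<in>arr C. tgt C a = tgt C b \<longrightarrow> (\<exists>d. is_glb (arr C) (rdiv C) a b d))"
  unfolding has_right_gcds_def is_glb_def by blast

lemma ex_is_glb_pres_monoid_iff:
  assumes "\<And>xs ys. xs \<in> lists G \<Longrightarrow> r (pclass R xs) (pclass R ys) \<longleftrightarrow> r' xs ys"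
  shows "(\<exists>D. is_glb (arr (pres_monoid G R)) r (pclass R b) (pclass R c) D) \<longleftrightarrow>
    (\<exists>d. is_glb (lists G) r' b c d)"
proof -
  have "(\<exists>D. is_glb (arr (pres_monoid G R)) r (pclass R b) (pclass R c) D) \<longleftrightarrow>
      (\<exists>d\<in>lists G. is_glb (arr (pres_monoid G R)) r (pclass R b) (pclass R c) (pclass R d))"
    unfolding is_glb_def[of "arr _"] by (auto simp: pres_monoid_simps(1))
  also have "\<dots> \<longleftrightarrow> (\<exists>d\<in>lists G. is_glb (lists G) r' b c d)"
    by (rule bex_cong)
      (simp_all add: is_glb_def pres_monoid_all_arr assms, simp add: pres_monoid_simps)
  also have "\<dots> \<longleftrightarrow> (\<exists>d. is_glb (lists G) r' b c d)"
    by (auto simp: is_glb_def)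
  finally show ?thesis .
qed

lemma has_left_gcds_pres_monoid_iff:
  "has_left_gcds (pres_monoid G R) \<longleftrightarrow>
    (\<forall>b\<in>lists G. \<forall>c\<in>lists G. \<exists>d. is_glb (lists G) (word_ldiv R G) b c d)"
  unfolding has_left_gcds_iff_is_glb pres_monoid_all_arr
  by (simp add: pres_monoid_simps(2) ex_is_glb_pres_monoid_iff pres_monoid_ldiv_iff)

lemma has_right_gcds_pres_monoid_iff:
  "has_right_gcds (pres_monoid G R) \<longleftrightarrow>
    (\<forall>b\<in>lists G. \<forall>c\<in>lists G. \<exists>d. is_glb (lists G) (word_rdiv R G) b c d)"
  unfolding has_right_gcds_iff_is_glb pres_monoid_all_arr
  by (simp add: pres_monoid_simps(3) ex_is_glb_pres_monoid_iff pres_monoid_rdiv_iff)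

text \<open>Reversing all words turns the presented monoid into its opposite.\<close>

definition rev_rel :: "('g list \<times> 'g list) set \<Rightarrow> ('g list \<times> 'g list) set" where
  "rev_rel R = (\<lambda>(l, r). (rev l, rev r)) ` R"

lemma rev_rel_rev_rel [simp]: "rev_rel (rev_rel R) = R"
  by (force simp: rev_rel_def image_image)

lemma pcong_rev: "pcong R xs ys \<Longrightarrow> pcong (rev_rel R) (rev xs) (rev ys)"
proof (induction rule: pcong.induct)
  case (rel l r xs ys)
  then have "(rev l, rev r) \<in> rev_rel R" by (force simp: rev_rel_def)
  from pcong.rel[OF this, of "rev ys" "rev xs"] show ?case by simp
qed (auto intro: pcong.intros)

lemma pcong_rev_rel_iff: "pcong (rev_rel R) xs ys \<longleftrightarrow> pcong R (rev xs) (rev ys)"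
  using pcong_rev[of R "rev xs" "rev ys"] pcong_rev[of "rev_rel R" xs ys] by auto

lemma ball_lists_rev: "(\<forall>x\<in>lists G. Q x) \<longleftrightarrow> (\<forall>x\<in>lists G. Q (rev x))"
  by (metis in_lists_conv_set rev_rev_ident set_rev)

lemma word_rdiv_iff_word_ldiv_rev: "word_rdiv R G a b \<longleftrightarrow> word_ldiv (rev_rel R) G (rev a) (rev b)"
proof -
  have "(\<exists>z\<in>lists G. pcong R (z @ a) b) \<longleftrightarrow> (\<exists>z\<in>lists G. pcong R (rev (rev a @ z)) b)"
    by (metis in_lists_conv_set rev_append rev_rev_ident set_rev)
  then show ?thesis
    by (simp add: word_rdiv_def word_ldiv_def pcong_rev_rel_iff)
qed

lemma right_cancellative_pres_monoid_iff_rev: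
  "right_cancellative (pres_monoid G R) \<longleftrightarrow> left_cancellative (pres_monoid G (rev_rel R))"
  unfolding right_cancellative_pres_monoid_iff left_cancellative_pres_monoid_iff pcong_rev_rel_iff
  by (subst (1 2 3) ball_lists_rev) simp

lemma has_right_gcds_pres_monoid_iff_rev:
  "has_right_gcds (pres_monoid G R) \<longleftrightarrow> has_left_gcds (pres_monoid G (rev_rel R))"
proof -
  have "is_glb (lists G) (word_rdiv R G) b c (rev d) \<longleftrightarrow>
      is_glb (lists G) (word_ldiv (rev_rel R) G) (rev b) (rev c) d" for b c d
    unfolding is_glb_def word_rdiv_iff_word_ldiv_rev
    by (subst ball_lists_rev) (simp add: in_lists_conv_set)
  then show ?thesis
    unfolding has_right_gcds_pres_monoid_iff has_left_gcds_pres_monoid_iff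
    by (subst (1 2) ball_lists_rev) (metis rev_rev_ident)
qed

locale arrow_category =
  fixes C :: "'c cat"
  assumes category: "category C"
begin

lemma arr_src_tgt:
  assumes "x \<in> arr C"
  shows "src C x \<in> arr C" "tgt C x \<in> arr C"
    "src C (src C x) = src C x" "tgt C (src C x) = src C x"
    "src C (tgt C x) = tgt C x" "tgt C (tgt C x) = tgt C x"
    "cmp C (src C x) x = x" "cmp C x (tgt C x) = x"
  using category assms unfolding category_def by auto

lemma composable_cmp:
  assumes "composable C x y"
  shows "cmp C x y \<in> arr C" "src C (cmp C x y) = src C x" "tgt C (cmp C x y) = tgt C y"
  using category assms unfolding category_def by auto

lemma cmp_assoc: "composable C x y \<Longrightarrow> composable C y z \<Longrightarrow> cmp C (cmp C x y) z = cmp C x (cmp C y z)"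
  using category unfolding category_def by blast

lemma is_identity_tgt: "is_identity C e \<Longrightarrow> tgt C e = e"
  unfolding is_identity_def using arr_src_tgt(4)[of e] by auto

lemma is_identity_iff_tgt: "is_identity C e \<longleftrightarrow> e \<in> arr C \<and> tgt C e = e"
  using is_identity_tgt arr_src_tgt(5) unfolding is_identity_def by metis

lemma is_identity_tgt_arr: "x \<in> arr C \<Longrightarrow> is_identity C (tgt C x)"
  by (simp add: arr_src_tgt is_identity_def)

lemma cmp_identity_left: "composable C e y \<Longrightarrow> is_identity C e \<Longrightarrow> cmp C e y = y"
  unfolding composable_def using is_identity_tgt[of e] arr_src_tgt(7)[of y] by auto

lemma cmp_identity_right: "composable C x e \<Longrightarrow> is_identity C e \<Longrightarrow> cmp C x e = x"
  unfolding composable_def is_identity_def using arr_src_tgt(5,8)[of x] by auto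

lemma ldiv_refl: "x \<in> arr C \<Longrightarrow> ldiv C x x"
  unfolding ldiv_def composable_def using arr_src_tgt[of x] by (auto intro!: exI[of _ "tgt C x"])

lemma ldiv_src_arr: "x \<in> arr C \<Longrightarrow> ldiv C (src C x) x"
  unfolding ldiv_def composable_def using arr_src_tgt[of x] by (auto intro!: exI[of _ x])

lemma ldiv_src: "ldiv C p x \<Longrightarrow> src C p = src C x"
  unfolding ldiv_def using composable_cmp(2) by auto

lemma ldiv_arr: "ldiv C p x \<Longrightarrow> p \<in> arr C \<and> x \<in> arr C"
  unfolding ldiv_def by (metis composable_cmp(1) composable_def)

end

locale conical_category = arrow_category +
  assumes conical: "conical C"
begin

lemma is_identity_cmpD1: "composable C x y \<Longrightarrow> is_identity C (cmp C x y) \<Longrightarrow> is_identity C x"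
  using conical unfolding conical_def by blast

lemma is_identity_cmpD2: "composable C x y \<Longrightarrow> is_identity C (cmp C x y) \<Longrightarrow> is_identity C y"
  using is_identity_cmpD1[of x y] cmp_identity_left[of x y] by auto

lemma ldiv_not_identity: "ldiv C p x \<Longrightarrow> \<not> is_identity C p \<Longrightarrow> \<not> is_identity C x"
  unfolding ldiv_def using is_identity_cmpD1 by blast

end

section \<open>Normal forms in the universal monoid\<close>

definition umon_rel :: "'c cat \<Rightarrow> ('c list \<times> 'c list) set" where
  "umon_rel C = {([e], []) | e. is_identity C e} \<union> {([x, y], [cmp C x y]) | x y. composable C x y}"

lemma umon_eq_pres_monoid: "umon C = pres_monoid (arr C) (umon_rel C)"
  by (simp add: umon_def umon_rel_def)

text \<open>Every word is equivalent to exactly one reduced word, obtained by pushing its letters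
  one at a time onto the empty word from the right.\<close>

fun reduced :: "'c cat \<Rightarrow> 'c list \<Rightarrow> bool" where
  "reduced C [] = True"
| "reduced C [x] = (\<not> is_identity C x)"
| "reduced C (x # y # ys) = (\<not> is_identity C x \<and> \<not> composable C x y \<and> reduced C (y # ys))"

definition push :: "'c cat \<Rightarrow> 'c \<Rightarrow> 'c list \<Rightarrow> 'c list" where
  "push C x ws = (if is_identity C x then ws else
     (case ws of [] \<Rightarrow> [x] | w # ws' \<Rightarrow> if composable C x w then cmp C x w # ws' else x # ws))"

definition reduce :: "'c cat \<Rightarrow> 'c list \<Rightarrow> 'c list" where
  "reduce C xs = foldr (push C) xs []"

lemma reduced_Cons:
  "reduced C (x # ws) \<longleftrightarrow> \<not> is_identity C x \<and> (ws \<noteq> [] \<longrightarrow> \<not> composable C x (hd ws)) \<and> reduced C ws"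
  by (cases ws) auto

lemma reduce_Nil [simp]: "reduce C [] = []"
  by (simp add: reduce_def)

lemma reduce_Cons: "reduce C (x # xs) = push C x (reduce C xs)"
  by (simp add: reduce_def)

lemma reduce_append: "reduce C (xs @ ys) = foldr (push C) xs (reduce C ys)"
  by (simp add: reduce_def)

lemma push_identity: "is_identity C e \<Longrightarrow> push C e ws = ws"
  by (simp add: push_def)

lemma push_not_composable:
  "\<not> is_identity C y \<Longrightarrow> ws \<noteq> [] \<Longrightarrow> \<not> composable C y (hd ws) \<Longrightarrow> push C y ws = y # ws"
  by (cases ws) (auto simp: push_def)

lemma push_eq_Nil_iff: "push C x ws = [] \<longleftrightarrow> is_identity C x \<and> ws = []"
  by (auto simp: push_def split: list.splits)

lemma foldr_push_eq_Nil: "foldr (push C) a ws = [] \<Longrightarrow> ws = []"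
  by (induction a) (auto simp: push_eq_Nil_iff)

lemma reduce_append_eq_Nil: "reduce C (a @ b) = [] \<Longrightarrow> reduce C a = []"
  using foldr_push_eq_Nil[of C a "reduce C b"] by (simp add: reduce_append reduce_def)

lemma reduce_reduced: "reduced C ws \<Longrightarrow> reduce C ws = ws"
proof (induction ws)
  case (Cons w ws)
  then show ?case by (cases ws) (simp_all add: reduce_Cons push_def)
qed simp

lemma pcong_push: "pcong (umon_rel C) (x # ws) (push C x ws)"
proof (cases "is_identity C x")
  case True
  then have "([x], []) \<in> umon_rel C" by (auto simp: umon_rel_def)
  from pcong.rel[OF this, of "[]" ws] True show ?thesis by (simp add: push_def)
next
  case False
  show ?thesis
  proof (cases "ws \<noteq> [] \<and> composable C x (hd ws)")
    case True
    then have "([x, hd ws], [cmp C x (hd ws)]) \<in> umon_rel C" by (auto simp: umon_rel_def)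
    from pcong.rel[OF this, of "[]" "tl ws"] True False show ?thesis
      by (cases ws) (simp_all add: push_def)
  qed (use False in \<open>cases ws; simp add: push_def pcong.refl\<close>)
qed

lemma pcong_reduce: "pcong (umon_rel C) xs (reduce C xs)"
proof (induction xs)
  case (Cons x xs)
  have "pcong (umon_rel C) ([x] @ xs @ []) ([x] @ reduce C xs @ [])"
    by (rule pcong_append_context[OF Cons])
  then show ?case
    using pcong_push[of C x "reduce C xs"] by (auto simp: reduce_Cons intro: pcong.trans)
qed (simp add: pcong.refl)

context conical_category
begin

lemma push_in_lists: "x \<in> arr C \<Longrightarrow> ws \<in> lists (arr C) \<Longrightarrow> push C x ws \<in> lists (arr C)"
  by (auto simp: push_def composable_cmp split: list.splits)

lemma reduce_in_lists: "xs \<in> lists (arr C) \<Longrightarrow> reduce C xs \<in> lists (arr C)"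
  by (induction xs) (auto simp: reduce_Cons push_in_lists)

lemma reduced_push: "reduced C ws \<Longrightarrow> reduced C (push C x ws)"
proof (cases ws)
  case (Cons w ws')
  assume "reduced C ws"
  moreover have "\<not> is_identity C (cmp C x w)" if "composable C x w" "\<not> is_identity C x"
    using is_identity_cmpD1 that by blast
  moreover have "\<not> composable C (cmp C x w) w'" if "composable C x w" "\<not> composable C w w'" for w'
    using that composable_cmp[of x w] by (auto simp: composable_def)
  ultimately show ?thesis
    using Cons by (cases ws') (auto simp: push_def)
qed (simp add: push_def)

lemma push_push:
  assumes "reduced C ws" and xy: "composable C x y"
  shows "push C x (push C y ws) = push C (cmp C x y) ws"
proof (cases "is_identity C x \<or> is_identity C y")
  case True
  then show ?thesis
    using xy by (auto simp: push_identity cmp_identity_left cmp_identity_right)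
next
  case False
  then have "\<not> is_identity C (cmp C x y)"
    using is_identity_cmpD1[OF xy] by blast
  moreover have "composable C (cmp C x y) w \<longleftrightarrow> composable C y w" for w
    using xy composable_cmp[OF xy] by (auto simp: composable_def)
  moreover have "composable C x (cmp C y w) \<and> \<not> is_identity C (cmp C y w) \<and>
      cmp C (cmp C x y) w = cmp C x (cmp C y w)" if "composable C y w" for w
    using that xy composable_cmp[OF that] cmp_assoc[OF xy that] is_identity_cmpD1[OF that] False
    by (auto simp: composable_def)
  moreover have "composable C x y" using xy .
  ultimately show ?thesis
    using False by (cases ws) (auto simp: push_def)
qed

lemma reduced_reduce: "reduced C (reduce C xs)"
  by (induction xs) (simp_all add: reduce_Cons reduced_push)

lemma reduce_eq_if_pcong: "pcong (umon_rel C) xs ys \<Longrightarrow> reduce C xs = reduce C ys"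
proof (induction rule: pcong.induct)
  case (rel l r xs ys)
  then have "foldr (push C) l (reduce C ys) = foldr (push C) r (reduce C ys)"
    using reduced_reduce[of ys] by (auto simp: umon_rel_def push_identity push_push)
  then show ?case by (simp add: reduce_append)
qed auto

lemma pcong_iff_reduce_eq: "pcong (umon_rel C) xs ys \<longleftrightarrow> reduce C xs = reduce C ys"
  using reduce_eq_if_pcong pcong_reduce[of C xs] pcong_reduce[of C ys]
  by (metis pcong.sym pcong.trans)

lemma conical_umon: "conical (umon C)"
  unfolding conical_def umon_eq_pres_monoid
proof (intro allI impI)
  fix X Y
  assume "composable (pres_monoid (arr C) (umon_rel C)) X Y \<and>
    is_identity (pres_monoid (arr C) (umon_rel C)) (cmp (pres_monoid (arr C) (umon_rel C)) X Y)"
  then obtain a b where "X = pclass (umon_rel C) a" "reduce C (a @ b) = []"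
    by (auto simp: pres_monoid_composable pres_monoid_simps pres_monoid_cmp pres_monoid_is_identity
        pclass_eq_iff pcong_iff_reduce_eq)
  then show "is_identity (pres_monoid (arr C) (umon_rel C)) X"
    by (simp add: pres_monoid_is_identity pclass_eq_iff pcong_iff_reduce_eq reduce_append_eq_Nil)
qed

end

locale conical_lc_category = conical_category +
  assumes left_cancellative: "left_cancellative C"
begin

lemma cmp_left_cancel: "composable C a x \<Longrightarrow> composable C a y \<Longrightarrow> cmp C a x = cmp C a y \<Longrightarrow> x = y"
  using left_cancellative unfolding left_cancellative_def by blast

lemma cmp_eq_left_imp_identity:
  assumes "composable C p q" "cmp C p q = p"
  shows "is_identity C q"
proof -
  have "p \<in> arr C" using assms(1) by (simp add: composable_def)
  then have "q = tgt C p"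
    using cmp_left_cancel[OF assms(1), of "tgt C p"] assms arr_src_tgt[of p]
    by (simp add: composable_def)
  then show ?thesis using is_identity_tgt_arr \<open>p \<in> arr C\<close> by simp
qed

lemma push_inj:
  assumes "reduced C W" "reduced C W'" "push C x W = push C x W'"
  shows "W = W'"
proof (cases "is_identity C x")
  case False
  have "cmp C x w \<noteq> x" "x \<noteq> cmp C x w" if "composable C x w" "\<not> is_identity C w" for w
    using cmp_eq_left_imp_identity that by metis+
  then show ?thesis
    using assms False cmp_left_cancel[of x]
    by (cases W; cases W') (auto simp: push_def reduced_Cons split: if_splits)
qed (use assms in \<open>simp add: push_def\<close>)

lemma foldr_push_inj:
  "reduced C W \<Longrightarrow> reduced C W' \<Longrightarrow> foldr (push C) a W = foldr (push C) a W' \<Longrightarrow> W = W'"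
proof (induction a)
  case (Cons x a)
  have "reduced C (foldr (push C) a V)" if "reduced C V" for V
    using that by (induction a) (simp_all add: reduced_push)
  with Cons show ?case using push_inj by simp
qed simp

lemma left_cancellative_umon: "left_cancellative (umon C)"
  unfolding umon_eq_pres_monoid left_cancellative_pres_monoid_iff
  using foldr_push_inj[OF reduced_reduce reduced_reduce]
  by (simp add: pcong_iff_reduce_eq reduce_append)

end

section \<open>Left divisibility and left gcds in the universal monoid\<close>

text \<open>On reduced words, \<open>nf_ldiv C a b\<close> says that \<open>a\<close> is a left divisor of \<open>b\<close>.\<close>

fun nf_ldiv :: "'c cat \<Rightarrow> 'c list \<Rightarrow> 'c list \<Rightarrow> bool" where
  "nf_ldiv C a [] \<longleftrightarrow> a = []"
| "nf_ldiv C a (x # b) \<longleftrightarrow>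
    a = [] \<or> (\<exists>p. a = [p] \<and> \<not> is_identity C p \<and> ldiv C p x) \<or> (\<exists>a'. a = x # a' \<and> nf_ldiv C a' b)"

lemma nf_ldiv_Nil [simp]: "nf_ldiv C [] b"
  by (cases b) auto

context conical_category
begin

lemma nf_ldiv_hd_src: "nf_ldiv C a b \<Longrightarrow> a \<noteq> [] \<Longrightarrow> b \<noteq> [] \<and> src C (hd a) = src C (hd b)"
  by (cases b) (auto dest: ldiv_src)

lemma nf_ldiv_hd:
  assumes "nf_ldiv C a (x # b)" "a \<noteq> []" "x \<in> arr C" "\<not> is_identity C x"
  shows "\<not> is_identity C (hd a)" "ldiv C (hd a) x" "hd a \<noteq> x \<Longrightarrow> tl a = []"
  using assms ldiv_refl by auto

lemma nf_ldiv_singleton_iff: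
  assumes "x \<in> arr C" "\<not> is_identity C x"
  shows "nf_ldiv C a [x] \<longleftrightarrow> a = [] \<or> (\<exists>p. a = [p] \<and> \<not> is_identity C p \<and> ldiv C p x)"
  using assms ldiv_refl by auto

lemma reduced_nf_ldiv:
  "reduced C b \<Longrightarrow> b \<in> lists (arr C) \<Longrightarrow> nf_ldiv C a b \<Longrightarrow> reduced C a \<and> a \<in> lists (arr C)"
proof (induction b arbitrary: a)
  case (Cons x b)
  from Cons.prems(3) consider "a = []" | p where "a = [p]" "\<not> is_identity C p" "ldiv C p x"
    | a' where "a = x # a'" "nf_ldiv C a' b"
    by auto
  then show ?case
  proof cases
    case 2
    then show ?thesis using ldiv_arr by auto
  next
    case 3
    have "\<not> composable C x (hd a')" if "a' \<noteq> []"
      using nf_ldiv_hd_src[OF 3(2) that] Cons.prems(1,2) arr_src_tgt(3)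
      by (cases b) (auto simp: composable_def)
    then show ?thesis
      using Cons 3 by (auto simp: reduced_Cons)
  qed simp
qed simp

lemma reduce_append_hd:
  assumes "a \<noteq> []" "reduced C a" "a \<in> lists (arr C)"
  shows "reduce C (a @ z) \<noteq> [] \<and> src C (hd (reduce C (a @ z))) = src C (hd a)"
  using assms
proof (induction a)
  case (Cons y a)
  show ?case
  proof (cases "a = []")
    case True
    then show ?thesis
      using Cons.prems composable_cmp(2)
      by (cases "reduce C z") (auto simp: reduce_Cons push_def)
  next
    case False
    then have IH: "reduce C (a @ z) \<noteq> [] \<and> src C (hd (reduce C (a @ z))) = src C (hd a)"
      using Cons by (simp add: reduced_Cons)
    have "\<not> composable C y (hd (reduce C (a @ z)))"
      using Cons.prems IH False by (cases a) (auto simp: composable_def)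
    then have "reduce C ((y # a) @ z) = y # reduce C (a @ z)"
      using push_not_composable[of C y "reduce C (a @ z)"] Cons.prems IH
      by (simp add: reduce_Cons reduced_Cons)
    then show ?thesis by simp
  qed
qed simp

lemma nf_ldiv_reduce_append:
  assumes "reduced C a" "a \<in> lists (arr C)"
  shows "nf_ldiv C a (reduce C (a @ z))"
  using assms
proof (induction a)
  case (Cons y a)
  have ya: "\<not> is_identity C y" "y \<in> arr C" "a \<in> lists (arr C)" "reduced C a"
    using Cons.prems by (auto simp: reduced_Cons)
  show ?case
  proof (cases "a = []")
    case True
    have "\<not> is_identity C (hd (reduce C z))" if "reduce C z \<noteq> []"
      using reduced_reduce[of z] that by (cases "reduce C z") (auto simp: reduced_Cons)
    then have "ldiv C y (cmp C y w)" if "composable C y w" for w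
      using that by (auto simp: ldiv_def)
    then show ?thesis
      using True ya by (cases "reduce C z") (auto simp: reduce_Cons push_def)
  next
    case False
    have h: "reduce C (a @ z) \<noteq> [] \<and> src C (hd (reduce C (a @ z))) = src C (hd a)"
      using reduce_append_hd[OF False ya(4,3)] .
    then have "\<not> composable C y (hd (reduce C (a @ z)))"
      using Cons.prems False by (cases a) (auto simp: composable_def)
    then have "reduce C ((y # a) @ z) = y # reduce C (a @ z)"
      using push_not_composable[OF ya(1)] h by (simp add: reduce_Cons)
    then show ?thesis
      using Cons.IH ya by simp
  qed
qed simp

lemma reduce_append_if_nf_ldiv:
  assumes "reduced C b" "b \<in> lists (arr C)" "nf_ldiv C a b"
  shows "\<exists>z\<in>lists (arr C). reduce C (a @ z) = b"
  using assms
proof (induction b arbitrary: a)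
  case Nil
  then show ?case by (intro bexI[of _ "[]"]) auto
next
  case (Cons x b)
  have xb: "\<not> is_identity C x" "x \<in> arr C" "b \<in> lists (arr C)" "reduced C b"
    "b \<noteq> [] \<longrightarrow> \<not> composable C x (hd b)"
    using Cons.prems by (auto simp: reduced_Cons)
  from Cons.prems(3) consider "a = []" | p where "a = [p]" "\<not> is_identity C p" "ldiv C p x"
    | a' where "a = x # a'" "nf_ldiv C a' b"
    by auto
  then show ?case
  proof cases
    case 1
    then show ?thesis
      using Cons.prems reduce_reduced by (intro bexI[of _ "x # b"]) auto
  next
    case 2
    then obtain q where q: "composable C p q" "cmp C p q = x"
      by (auto simp: ldiv_def)
    have "reduce C ([p] @ q # b) = x # b"
    proof (cases "is_identity C q")
      case True
      then show ?thesis
        using q xb 2 cmp_identity_right[OF q(1)] reduce_reduced[of C "x # b"] Cons.prems(1)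
        by (simp add: reduce_Cons push_identity)
    next
      case False
      have "tgt C q = tgt C x" "q \<in> arr C"
        using composable_cmp(3)[OF q(1)] q by (auto simp: composable_def)
      then have "reduced C (q # b)"
        using xb False by (cases b) (auto simp: composable_def)
      have "reduce C ([p] @ q # b) = push C p (reduce C (q # b))"
        by (simp add: reduce_Cons)
      also have "\<dots> = push C p (q # b)"
        using reduce_reduced[OF \<open>reduced C (q # b)\<close>] by simp
      also have "\<dots> = x # b"
        using q 2 by (simp add: push_def)
      finally show ?thesis .
    qed
    moreover have "q \<in> arr C" using q(1) by (simp add: composable_def)
    ultimately show ?thesis
      using 2 xb by (intro bexI[of _ "q # b"]) auto
  next
    case 3
    then obtain z where "z \<in> lists (arr C)" "reduce C (a' @ z) = b"
      using Cons.IH xb by blast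
    moreover have "push C x b = x # b"
      using xb by (cases b) (auto simp: push_def)
    ultimately show ?thesis
      using 3 by (auto simp: reduce_Cons)
  qed
qed

lemma word_ldiv_iff_nf_ldiv:
  assumes "a \<in> lists (arr C)" "b \<in> lists (arr C)"
  shows "word_ldiv (umon_rel C) (arr C) a b \<longleftrightarrow> nf_ldiv C (reduce C a) (reduce C b)"
proof -
  have reduce_a: "reduce C (a @ z) = reduce C (reduce C a @ z)" for z
  proof -
    have "pcong (umon_rel C) ([] @ a @ z) ([] @ reduce C a @ z)"
      by (rule pcong_append_context[OF pcong_reduce])
    then show ?thesis by (simp add: pcong_iff_reduce_eq)
  qed
  show ?thesis
  proof
    assume "word_ldiv (umon_rel C) (arr C) a b"
    then obtain z where "reduce C (a @ z) = reduce C b"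
      by (auto simp: word_ldiv_def pcong_iff_reduce_eq)
    then have "reduce C b = reduce C (reduce C a @ z)"
      using reduce_a by simp
    then show "nf_ldiv C (reduce C a) (reduce C b)"
      using nf_ldiv_reduce_append[OF reduced_reduce reduce_in_lists[OF assms(1)], of z] by simp
  next
    assume "nf_ldiv C (reduce C a) (reduce C b)"
    then obtain z where "z \<in> lists (arr C)" "reduce C (reduce C a @ z) = reduce C b"
      using reduce_append_if_nf_ldiv reduced_reduce reduce_in_lists[OF assms(2)] reduce_reduced
      by metis
    then show "word_ldiv (umon_rel C) (arr C) a b"
      using reduce_a by (auto simp: word_ldiv_def pcong_iff_reduce_eq)
  qed
qed

end

lemma is_glb_nf_ldiv_Cons:
  "is_glb UNIV (nf_ldiv C) b c g \<Longrightarrow> is_glb UNIV (nf_ldiv C) (x # b) (x # c) (x # g)"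
  unfolding is_glb_def by auto

definition arr_gcd :: "'c cat \<Rightarrow> 'c \<Rightarrow> 'c \<Rightarrow> 'c" where
  "arr_gcd C x y = (SOME d. is_glb (arr C) (ldiv C) x y d)"

fun nf_gcd :: "'c cat \<Rightarrow> 'c list \<Rightarrow> 'c list \<Rightarrow> 'c list" where
  "nf_gcd C (x # b) (y # c) =
    (if x = y then x # nf_gcd C b c
     else if src C x = src C y \<and> \<not> is_identity C (arr_gcd C x y) then [arr_gcd C x y] else [])"
| "nf_gcd C _ _ = []"

locale left_gcd_category = conical_category +
  assumes left_gcds: "has_left_gcds C"
begin

lemma is_glb_arr_gcd:
  "x \<in> arr C \<Longrightarrow> y \<in> arr C \<Longrightarrow> src C x = src C y \<Longrightarrow> is_glb (arr C) (ldiv C) x y (arr_gcd C x y)"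
  using left_gcds unfolding has_left_gcds_iff_is_glb arr_gcd_def by (blast intro: someI_ex)

lemma nf_ldiv_common_Cons:
  assumes "x \<noteq> y" "nf_ldiv C a (x # b)" "nf_ldiv C a (y # c)"
    and "x \<in> arr C" "\<not> is_identity C x" "y \<in> arr C" "\<not> is_identity C y"
  shows "a = [] \<or> (\<exists>p. a = [p] \<and> \<not> is_identity C p \<and> ldiv C p x \<and> ldiv C p y)"
proof (cases a)
  case (Cons p a')
  then have "a' = []"
    using nf_ldiv_hd[OF assms(2)] nf_ldiv_hd[OF assms(3)] assms(1,4-7) by fastforce
  then show ?thesis
    using Cons nf_ldiv_hd[OF assms(2)] nf_ldiv_hd[OF assms(3)] assms(4-7) by auto
qed simp

lemma is_glb_nf_gcd_Cons_Cons:
  assumes "x \<noteq> y" and xy: "x \<in> arr C" "\<not> is_identity C x" "y \<in> arr C" "\<not> is_identity C y"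
  shows "is_glb UNIV (nf_ldiv C) (x # b) (y # c) (nf_gcd C (x # b) (y # c))"
proof -
  define g where "g = arr_gcd C x y"
  have common: "a = [] \<or> (\<exists>p. a = [p] \<and> \<not> is_identity C p \<and> ldiv C p x \<and> ldiv C p y)"
    if "nf_ldiv C a (x # b)" "nf_ldiv C a (y # c)" for a
    using nf_ldiv_common_Cons[OF assms(1) that xy] .
  show ?thesis
  proof (cases "src C x = src C y \<and> \<not> is_identity C g")
    case True
    have glb: "is_glb (arr C) (ldiv C) x y g"
      using is_glb_arr_gcd[OF xy(1,3)] True by (simp add: g_def)
    then have "ldiv C g x" "ldiv C g y"
      unfolding is_glb_def by blast+
    have "ldiv C p g" if "ldiv C p x" "ldiv C p y" for p
      using glb that ldiv_arr unfolding is_glb_def by blast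
    then have "nf_ldiv C a [g]" if "nf_ldiv C a (x # b)" "nf_ldiv C a (y # c)" for a
      using common[OF that] True by auto
    then show ?thesis
      using assms True \<open>ldiv C g x\<close> \<open>ldiv C g y\<close> by (simp add: is_glb_def g_def)
  next
    case False
    have only_trivial: "nf_ldiv C a []"
      if divides: "nf_ldiv C a (x # b)" "nf_ldiv C a (y # c)" for a
    proof (rule ccontr)
      assume "\<not> nf_ldiv C a []"
      then obtain p where p: "\<not> is_identity C p" "ldiv C p x" "ldiv C p y"
        using common[OF divides] by auto
      then have src: "src C x = src C y"
        using ldiv_src[of p x] ldiv_src[of p y] by simp
      have "is_glb (arr C) (ldiv C) x y g"
        using is_glb_arr_gcd[OF xy(1,3) src] by (simp add: g_def)
      then have "ldiv C p g"
        using p ldiv_arr unfolding is_glb_def by blast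
      then show False
        using False p(1) src ldiv_not_identity by blast
    qed
    have "is_glb UNIV (nf_ldiv C) (x # b) (y # c) []"
      unfolding is_glb_def using only_trivial nf_ldiv_Nil by blast
    then show ?thesis
      using assms(1) False by (auto simp: g_def)
  qed
qed

lemma is_glb_nf_gcd:
  assumes "reduced C b" "b \<in> lists (arr C)" "reduced C c" "c \<in> lists (arr C)"
  shows "is_glb UNIV (nf_ldiv C) b c (nf_gcd C b c)"
  using assms
proof (induction b arbitrary: c)
  case (Cons x b)
  show ?case
  proof (cases c)
    case yc: (Cons y c')
    show ?thesis
    proof (cases "x = y")
      case True
      then show ?thesis
        using Cons.IH Cons.prems yc by (auto simp: reduced_Cons intro: is_glb_nf_ldiv_Cons)
    next
      case False
      then show ?thesis
        using Cons.prems yc is_glb_nf_gcd_Cons_Cons by (simp add: reduced_Cons)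
    qed
  qed (simp add: is_glb_def)
qed (simp add: is_glb_def)

lemma has_left_gcds_umon: "has_left_gcds (umon C)"
  unfolding umon_eq_pres_monoid has_left_gcds_pres_monoid_iff
proof (intro ballI exI)
  fix b c assume bc: "b \<in> lists (arr C)" "c \<in> lists (arr C)"
  define d where "d = nf_gcd C (reduce C b) (reduce C c)"
  have glb: "is_glb UNIV (nf_ldiv C) (reduce C b) (reduce C c) d"
    unfolding d_def using bc by (intro is_glb_nf_gcd reduced_reduce reduce_in_lists)
  then have "reduced C d" "d \<in> lists (arr C)"
    using reduced_nf_ldiv[OF reduced_reduce reduce_in_lists[OF bc(1)]] by (auto simp: is_glb_def)
  then show "is_glb (lists (arr C)) (word_ldiv (umon_rel C) (arr C)) b c d"
    using glb bc by (auto simp: is_glb_def word_ldiv_iff_nf_ldiv reduce_reduced)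
qed

end

context conical_category
begin

lemma word_ldiv_singleton_left_iff:
  assumes "c \<in> arr C" "\<not> is_identity C c" "b \<in> lists (arr C)"
  shows "word_ldiv (umon_rel C) (arr C) [c] b \<longleftrightarrow> nf_ldiv C [c] (reduce C b)"
  using assms word_ldiv_iff_nf_ldiv[of "[c]" b] reduce_reduced[of C "[c]"] by simp

lemma word_ldiv_singleton_iff:
  assumes "c \<in> arr C" "\<not> is_identity C c" "x \<in> arr C" "\<not> is_identity C x"
  shows "word_ldiv (umon_rel C) (arr C) [c] [x] \<longleftrightarrow> ldiv C c x"
  using assms word_ldiv_singleton_left_iff[of c "[x]"] reduce_reduced[of C "[x]"] ldiv_refl
  by auto

lemma is_glb_non_identities_of_umon:
  assumes "has_left_gcds (umon C)"
    and x: "x \<in> arr C" "\<not> is_identity C x" and y: "y \<in> arr C" "\<not> is_identity C y"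
    and "src C x = src C y"
  shows "\<exists>d. is_glb (arr C) (ldiv C) x y d"
proof -
  have "[x] \<in> lists (arr C)" "[y] \<in> lists (arr C)"
    using x y by auto
  then obtain d where d: "is_glb (lists (arr C)) (word_ldiv (umon_rel C) (arr C)) [x] [y] d"
    using assms(1) unfolding umon_eq_pres_monoid has_left_gcds_pres_monoid_iff by blast
  then have "d \<in> lists (arr C)" by (simp add: is_glb_def)
  define dd where "dd = reduce C d"
  have "nf_ldiv C dd [x]" "nf_ldiv C dd [y]"
    using d x y \<open>d \<in> lists (arr C)\<close> reduce_reduced[of C "[x]"] reduce_reduced[of C "[y]"]
    by (auto simp: is_glb_def dd_def word_ldiv_iff_nf_ldiv)
  then consider "dd = []" | p where "dd = [p]" "\<not> is_identity C p" "ldiv C p x" "ldiv C p y"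
    using nf_ldiv_singleton_iff[OF x] nf_ldiv_singleton_iff[OF y] by blast
  then obtain g where g: "ldiv C g x" "ldiv C g y" "dd \<noteq> [] \<Longrightarrow> dd = [g] \<and> \<not> is_identity C g"
    using x y assms(6) ldiv_src_arr by metis
  have "ldiv C c g" if c: "c \<in> arr C" "ldiv C c x" "ldiv C c y" for c
  proof (cases "is_identity C c")
    case True
    then show ?thesis
      using c(2) g(1) ldiv_src ldiv_arr ldiv_src_arr by (metis is_identity_def)
  next
    case False
    then have "word_ldiv (umon_rel C) (arr C) [c] d"
      using d c x y word_ldiv_singleton_iff by (auto simp: is_glb_def)
    then have "nf_ldiv C [c] dd"
      using word_ldiv_singleton_left_iff c(1) False \<open>d \<in> lists (arr C)\<close> by (simp add: dd_def)
    moreover have "g \<in> arr C" using g(1) ldiv_arr by blast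
    ultimately show ?thesis
      using g(3) ldiv_refl by (cases dd) auto
  qed
  then have "is_glb (arr C) (ldiv C) x y g"
    using g ldiv_arr unfolding is_glb_def by blast
  then show ?thesis ..
qed

lemma has_left_gcds_of_umon:
  assumes "has_left_gcds (umon C)"
  shows "has_left_gcds C"
  unfolding has_left_gcds_iff_is_glb
proof (intro ballI impI)
  fix x y assume xy: "x \<in> arr C" "y \<in> arr C" "src C x = src C y"
  have "is_glb (arr C) (ldiv C) a b a" if "is_identity C a" "b \<in> arr C" "src C a = src C b" for a b
    using that ldiv_refl ldiv_src_arr ldiv_src unfolding is_glb_def is_identity_def by metis
  then show "\<exists>d. is_glb (arr C) (ldiv C) x y d"
    using is_glb_non_identities_of_umon[OF assms] xy is_glb_commute by metis
qed

end

section \<open>Duality\<close>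

definition op_cat :: "'c cat \<Rightarrow> 'c cat" where
  "op_cat C = \<lparr>arr = arr C, src = tgt C, tgt = src C, cmp = (\<lambda>x y. cmp C y x)\<rparr>"

lemma op_cat_simps [simp]:
  "arr (op_cat C) = arr C" "src (op_cat C) = tgt C" "tgt (op_cat C) = src C"
  "cmp (op_cat C) x y = cmp C y x"
  by (simp_all add: op_cat_def)

lemma composable_op_cat: "composable (op_cat C) x y \<longleftrightarrow> composable C y x"
  by (auto simp: composable_def)

lemma ldiv_op_cat: "ldiv (op_cat C) a b \<longleftrightarrow> rdiv C a b"
  by (simp add: ldiv_def rdiv_def composable_op_cat)

lemma has_left_gcds_op_cat: "has_left_gcds (op_cat C) \<longleftrightarrow> has_right_gcds C"
  by (simp add: has_left_gcds_def has_right_gcds_def ldiv_op_cat)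

lemma left_cancellative_op_cat: "left_cancellative (op_cat C) \<longleftrightarrow> right_cancellative C"
  by (simp add: left_cancellative_def right_cancellative_def composable_op_cat)

lemma category_op_cat: "category C \<Longrightarrow> category (op_cat C)"
  unfolding category_def by (simp add: composable_op_cat)

context conical_category
begin

lemma is_identity_op_cat: "is_identity (op_cat C) e \<longleftrightarrow> is_identity C e"
  using is_identity_iff_tgt[of e] by (simp add: is_identity_def[of "op_cat C"])

lemma conical_category_op_cat: "conical_category (op_cat C)"
proof -
  have "conical (op_cat C)"
    unfolding conical_def composable_op_cat is_identity_op_cat op_cat_simps
    using is_identity_cmpD2 by blast
  then show ?thesis
    by (simp add: conical_category_def conical_category_axioms_def arrow_category_def
        category_op_cat[OF category])
qed

lemma umon_rel_op_cat: "umon_rel (op_cat C) = rev_rel (umon_rel C)"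
  unfolding umon_rel_def rev_rel_def
  by (auto simp: is_identity_op_cat composable_op_cat image_iff; force)

lemma right_cancellative_umon_iff_op_cat:
  "right_cancellative (umon C) \<longleftrightarrow> left_cancellative (umon (op_cat C))"
  by (simp add: umon_eq_pres_monoid right_cancellative_pres_monoid_iff_rev umon_rel_op_cat)

lemma has_right_gcds_umon_iff_op_cat: "has_right_gcds (umon C) \<longleftrightarrow> has_left_gcds (umon (op_cat C))"
  by (simp add: umon_eq_pres_monoid has_right_gcds_pres_monoid_iff_rev umon_rel_op_cat)

end

lemma gcd_monoid_umon_iff:
  "gcd_monoid (umon C) \<longleftrightarrow> conical (umon C) \<and> left_cancellative (umon C) \<and> right_cancellative (umon C)
    \<and> has_left_gcds (umon C) \<and> has_right_gcds (umon C)"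
  by (simp add: gcd_monoid_def gcd_category_def umon_eq_pres_monoid category_pres_monoid
      pres_monoid_is_identity)

theorem gcd_monoid_umon:
  assumes "gcd_category C"
  shows "gcd_monoid (umon C)"
proof -
  interpret C: left_gcd_category C
    using assms by (simp add: gcd_category_def left_gcd_category_def left_gcd_category_axioms_def
        conical_category_def conical_category_axioms_def arrow_category_def)
  interpret C: conical_lc_category C
    using assms by (simp add: gcd_category_def conical_lc_category_axioms_def
        conical_lc_category_def C.conical_category_axioms)
  interpret D: left_gcd_category "op_cat C"
    using assms C.conical_category_op_cat
    by (simp add: left_gcd_category_def left_gcd_category_axioms_def has_left_gcds_op_cat
        gcd_category_def)
  interpret D: conical_lc_category "op_cat C"
    using assms by (simp add: gcd_category_def conical_lc_category_axioms_def
        conical_lc_category_def D.conical_category_axioms left_cancellative_op_cat)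
  show ?thesis
    using C.conical_umon C.left_cancellative_umon D.left_cancellative_umon C.has_left_gcds_umon
      D.has_left_gcds_umon
    unfolding gcd_monoid_umon_iff C.right_cancellative_umon_iff_op_cat
      C.has_right_gcds_umon_iff_op_cat
    by blast
qed

theorem gcd_category_if_gcd_monoid_umon:
  assumes "category C" "conical C" "left_cancellative C" "right_cancellative C"
    and "gcd_monoid (umon C)"
  shows "gcd_category C"
proof -
  interpret C: conical_category C
    using assms by (simp add: conical_category_def conical_category_axioms_def arrow_category_def)
  interpret D: conical_category "op_cat C"
    by (rule C.conical_category_op_cat)
  have "has_left_gcds (umon C)" "has_left_gcds (umon (op_cat C))"
    using assms(5) unfolding gcd_monoid_umon_iff C.has_right_gcds_umon_iff_op_cat by blast+
  then show ?thesis
    using assms C.has_left_gcds_of_umon D.has_left_gcds_of_umon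
    by (simp add: gcd_category_def has_left_gcds_op_cat)
qed

section \<open>The interval monoid as a universal monoid\<close>

definition poset_cat :: "'a::order set \<Rightarrow> ('a \<times> 'a) cat" where
  "poset_cat P = \<lparr>arr = {(x, y). x \<in> P \<and> y \<in> P \<and> x \<le> y}, src = (\<lambda>p. (fst p, fst p)),
     tgt = (\<lambda>p. (snd p, snd p)), cmp = (\<lambda>p q. (fst p, snd q))\<rparr>"

lemma poset_cat_simps [simp]:
  "arr (poset_cat P) = {(x, y). x \<in> P \<and> y \<in> P \<and> x \<le> y}"
  "src (poset_cat P) p = (fst p, fst p)" "tgt (poset_cat P) p = (snd p, snd p)"
  "cmp (poset_cat P) p q = (fst p, snd q)"
  by (simp_all add: poset_cat_def)

lemma composable_poset_cat:
  "composable (poset_cat P) p q \<longleftrightarrow> p \<in> arr (poset_cat P) \<and> q \<in> arr (poset_cat P) \<and> snd p = fst q"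
  by (auto simp: composable_def)

lemma is_identity_poset_cat: "is_identity (poset_cat P) e \<longleftrightarrow> (\<exists>x\<in>P. e = (x, x))"
  by (auto simp: is_identity_def)

lemma category_poset_cat: "category (poset_cat P)"
  unfolding category_def composable_poset_cat by (auto intro: order_trans)

lemma conical_poset_cat: "conical (poset_cat P)"
  unfolding conical_def composable_poset_cat is_identity_poset_cat by (auto intro: order.antisym)

lemma left_cancellative_poset_cat: "left_cancellative (poset_cat P)"
  unfolding left_cancellative_def composable_poset_cat by auto

lemma right_cancellative_poset_cat: "right_cancellative (poset_cat P)"
  unfolding right_cancellative_def composable_poset_cat by auto

lemma ldiv_poset_cat:
  "ldiv (poset_cat P) p q \<longleftrightarrow>
    p \<in> arr (poset_cat P) \<and> q \<in> arr (poset_cat P) \<and> fst p = fst q \<and> snd p \<le> snd q"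
  unfolding ldiv_def composable_poset_cat
  by (cases p; cases q) (auto intro!: exI[of _ "(snd p, snd q)"])

lemma rdiv_poset_cat:
  "rdiv (poset_cat P) p q \<longleftrightarrow>
    p \<in> arr (poset_cat P) \<and> q \<in> arr (poset_cat P) \<and> snd p = snd q \<and> fst q \<le> fst p"
  unfolding rdiv_def composable_poset_cat
  by (cases p; cases q) (auto intro!: exI[of _ "(fst q, fst p)"])

lemma pcong_Un_converse: "pcong (R \<union> S\<inverse>) = pcong (R \<union> S)"
proof -
  have "pcong (R \<union> S) l r" if "(l, r) \<in> R \<union> S\<inverse>" for l r
    using that pcong_of_rel[of l r "R \<union> S"] pcong_of_rel[of r l "R \<union> S"] pcong.sym by blast
  moreover have "pcong (R \<union> S\<inverse>) l r" if "(l, r) \<in> R \<union> S" for l r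
    using that pcong_of_rel[of l r "R \<union> S\<inverse>"] pcong_of_rel[of r l "R \<union> S\<inverse>"] pcong.sym by blast
  ultimately show ?thesis
    using pcong_mono[of "R \<union> S\<inverse>" "R \<union> S"] pcong_mono[of "R \<union> S" "R \<union> S\<inverse>"]
    by (intro ext iffI) blast+
qed

lemma pres_monoid_cong: "pcong R = pcong R' \<Longrightarrow> pres_monoid G R = pres_monoid G R'"
  by (simp add: pres_monoid_def pclass_def)

lemma interval_monoid_eq_umon: "interval_monoid P = umon (poset_cat P)"
proof -
  define I :: "(('a \<times> 'a) list \<times> ('a \<times> 'a) list) set" where "I = {([(x, x)], []) | x. x \<in> P}"
  define T where "T = {([(x, y), (y, z)], [(x, z)]) | x y z.
    x \<in> P \<and> y \<in> P \<and> z \<in> P \<and> x \<le> y \<and> y \<le> z}"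
  have "{([e], []) | e. is_identity (poset_cat P) e} = I"
    unfolding is_identity_poset_cat I_def by auto
  moreover have "{([p, q], [cmp (poset_cat P) p q]) | p q. composable (poset_cat P) p q} = T"
    unfolding composable_poset_cat T_def by fastforce
  ultimately have "umon (poset_cat P) = pres_monoid (arr (poset_cat P)) (I \<union> T)"
    by (simp add: umon_def)
  moreover have "T\<inverse> = {([(x, z)], [(x, y), (y, z)]) | x y z.
      x \<in> P \<and> y \<in> P \<and> z \<in> P \<and> x \<le> y \<and> y \<le> z}"
    unfolding T_def by auto
  then have "interval_monoid P = pres_monoid (arr (poset_cat P)) (I \<union> T\<inverse>)"
    by (simp add: interval_monoid_def I_def)
  ultimately show ?thesis
    using pres_monoid_cong pcong_Un_converse by metis
qed

lemma gcd_category_poset_cat: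
  "gcd_monoid (interval_monoid P) \<Longrightarrow> gcd_category (poset_cat P)"
  unfolding interval_monoid_eq_umon
  by (intro gcd_category_if_gcd_monoid_umon category_poset_cat conical_poset_cat
      left_cancellative_poset_cat right_cancellative_poset_cat)

lemma poset_meet:
  assumes "has_left_gcds (poset_cat P)" "x \<in> P" "y \<in> P" "z \<in> P" "x \<le> y" "x \<le> z"
  shows "\<exists>w. is_glb {w\<in>P. x \<le> w} (\<le>) y z w"
proof -
  have "(x, y) \<in> arr (poset_cat P)" "(x, z) \<in> arr (poset_cat P)"
    "src (poset_cat P) (x, y) = src (poset_cat P) (x, z)"
    using assms by simp_all
  then obtain d where "is_glb (arr (poset_cat P)) (ldiv (poset_cat P)) (x, y) (x, z) d"
    using assms(1) unfolding has_left_gcds_iff_is_glb by blast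
  then have d: "ldiv (poset_cat P) d (x, y)" "ldiv (poset_cat P) d (x, z)"
    "\<And>c. c \<in> arr (poset_cat P) \<Longrightarrow> ldiv (poset_cat P) c (x, y) \<Longrightarrow> ldiv (poset_cat P) c (x, z)
      \<Longrightarrow> ldiv (poset_cat P) c d"
    unfolding is_glb_def by blast+
  have "is_glb {w\<in>P. x \<le> w} (\<le>) y z (snd d)"
    unfolding is_glb_def
  proof (intro conjI ballI impI)
    show "snd d \<in> {w\<in>P. x \<le> w}" "snd d \<le> y" "snd d \<le> z"
      using d(1,2) by (auto simp: ldiv_poset_cat)
  next
    fix c assume "c \<in> {w\<in>P. x \<le> w}" "c \<le> y \<and> c \<le> z"
    then have "ldiv (poset_cat P) (x, c) d"
      using d(3)[of "(x, c)"] assms by (simp add: ldiv_poset_cat)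
    then show "c \<le> snd d" by (simp add: ldiv_poset_cat)
  qed
  then show ?thesis ..
qed

lemma poset_join:
  assumes "has_right_gcds (poset_cat P)" "x \<in> P" "y \<in> P" "z \<in> P" "y \<le> x" "z \<le> x"
  shows "\<exists>w. is_glb {w\<in>P. w \<le> x} (\<ge>) y z w"
proof -
  have "(y, x) \<in> arr (poset_cat P)" "(z, x) \<in> arr (poset_cat P)"
    "tgt (poset_cat P) (y, x) = tgt (poset_cat P) (z, x)"
    using assms by simp_all
  then obtain d where "is_glb (arr (poset_cat P)) (rdiv (poset_cat P)) (y, x) (z, x) d"
    using assms(1) unfolding has_right_gcds_iff_is_glb by blast
  then have d: "rdiv (poset_cat P) d (y, x)" "rdiv (poset_cat P) d (z, x)"
    "\<And>c. c \<in> arr (poset_cat P) \<Longrightarrow> rdiv (poset_cat P) c (y, x) \<Longrightarrow> rdiv (poset_cat P) c (z, x)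
      \<Longrightarrow> rdiv (poset_cat P) c d"
    unfolding is_glb_def by blast+
  have "is_glb {w\<in>P. w \<le> x} (\<ge>) y z (fst d)"
    unfolding is_glb_def
  proof (intro conjI ballI impI)
    show "fst d \<in> {w\<in>P. w \<le> x}" "fst d \<ge> y" "fst d \<ge> z"
      using d(1,2) by (auto simp: rdiv_poset_cat)
  next
    fix c assume "c \<in> {w\<in>P. w \<le> x}" "c \<ge> y \<and> c \<ge> z"
    then have "rdiv (poset_cat P) (c, x) d"
      using d(3)[of "(c, x)"] assms by (simp add: rdiv_poset_cat)
    then show "c \<ge> fst d" by (simp add: rdiv_poset_cat)
  qed
  then show ?thesis ..
qed

section \<open>Maximal chains of an extreme spindle\<close>

locale extreme_spindle_category =
  fixes P :: "'a::order set" and u v :: 'a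
  assumes extreme_spindle: "extreme_spindle P u v"
begin

definition inner :: "'a \<Rightarrow> bool" where
  "inner y \<longleftrightarrow> y \<in> P \<and> u < y \<and> y < v"

abbreviation MC :: "'a set set" where
  "MC \<equiv> max_chains P u v"

lemma u_in_P: "u \<in> P" and v_in_P: "v \<in> P" and u_less_v: "u < v"
  using extreme_spindle by (simp_all add: extreme_spindle_def spindle_def)

lemma u_minimal: "x \<in> P \<Longrightarrow> x \<le> u \<Longrightarrow> x = u"
  and v_maximal: "x \<in> P \<Longrightarrow> v \<le> x \<Longrightarrow> x = v"
  using extreme_spindle by (simp_all add: extreme_spindle_def)

lemma inner_comparable_trans:
  assumes "inner a" "inner b" "inner c" "a \<le> b \<or> b \<le> a" "b \<le> c \<or> c \<le> b"
  shows "a \<le> c \<or> c \<le> a"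
proof -
  define I where "I = {x\<in>P. u < x \<and> x < v}"
  have "trans {(a, b). a \<in> I \<and> b \<in> I \<and> (a \<le> b \<or> b \<le> a)}"
    using extreme_spindle unfolding extreme_spindle_def spindle_def Let_def equiv_def I_def by blast
  then show ?thesis
    using assms unfolding I_def inner_def trans_def by blast
qed

lemma max_chainsD:
  assumes "Z \<in> MC"
  shows "Z \<subseteq> {x\<in>P. u \<le> x \<and> x \<le> v}" "is_chain Z"
    "\<And>W. W \<subseteq> {x\<in>P. u \<le> x \<and> x \<le> v} \<Longrightarrow> is_chain W \<Longrightarrow> Z \<subseteq> W \<Longrightarrow> W = Z"
  using assms unfolding max_chains_def by blast+

lemma max_chain_mem: "Z \<in> MC \<Longrightarrow> w \<in> Z \<Longrightarrow> w \<in> P \<and> u \<le> w \<and> w \<le> v"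
  using max_chainsD(1) by blast

lemma max_chain_cases: "Z \<in> MC \<Longrightarrow> w \<in> Z \<Longrightarrow> w = u \<or> w = v \<or> inner w"
  using max_chain_mem[of Z w] unfolding inner_def by (auto simp: order.order_iff_strict)

lemma max_chain_insert:
  assumes "Z \<in> MC" "y \<in> P" "u \<le> y" "y \<le> v" "\<forall>a\<in>Z. a \<le> y \<or> y \<le> a"
  shows "y \<in> Z"
proof -
  have "is_chain (insert y Z)"
    using max_chainsD(2)[OF assms(1)] assms(5) unfolding is_chain_def by blast
  then have "insert y Z = Z"
    using max_chainsD[OF assms(1)] assms(2-4) by (intro max_chainsD(3)[OF assms(1)]) auto
  then show ?thesis by blast
qed

lemma u_in_max_chain: "Z \<in> MC \<Longrightarrow> u \<in> Z"
  and v_in_max_chain: "Z \<in> MC \<Longrightarrow> v \<in> Z"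
  using max_chain_insert[of Z u] max_chain_insert[of Z v] max_chain_mem[of Z] u_in_P v_in_P u_less_v
  by auto

lemma max_chain_comparable_closed:
  assumes Z: "Z \<in> MC" and w: "w \<in> Z" "inner w" and y: "inner y" "w \<le> y \<or> y \<le> w"
  shows "y \<in> Z"
proof (rule max_chain_insert[OF Z])
  show "y \<in> P" "u \<le> y" "y \<le> v" using y by (auto simp: inner_def)
  show "\<forall>a\<in>Z. a \<le> y \<or> y \<le> a"
  proof
    fix a assume a: "a \<in> Z"
    have "a \<le> w \<or> w \<le> a" using max_chainsD(2)[OF Z] a w(1) unfolding is_chain_def by blast
    then show "a \<le> y \<or> y \<le> a"
      using max_chain_cases[OF Z a] inner_comparable_trans[of a w y] w y
      by (auto simp: inner_def)
  qed
qed

text \<open>The maximal chains of \<open>[u,v]\<close> are exactly the comparability classes of the open interval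
  with \<open>u\<close> and \<open>v\<close> added.\<close>

lemma max_chain_through:
  assumes y: "inner y"
  shows "\<exists>Z\<in>MC. y \<in> Z"
proof -
  define Z where "Z = {u, v} \<union> {w. inner w \<and> (w \<le> y \<or> y \<le> w)}"
  have "is_chain Z"
    unfolding is_chain_def Z_def using u_less_v inner_comparable_trans[of _ y] y
    by (auto simp: inner_def order.order_iff_strict)
  moreover have "W = Z" if W: "W \<subseteq> {x\<in>P. u \<le> x \<and> x \<le> v}" "is_chain W" "Z \<subseteq> W" for W
  proof
    have "y \<in> W" using W(3) y unfolding Z_def by auto
    then show "W \<subseteq> Z"
      using W(1,2) unfolding is_chain_def Z_def inner_def by (auto simp: order.order_iff_strict)
  qed (use W in auto)
  moreover have "Z \<subseteq> {x\<in>P. u \<le> x \<and> x \<le> v}"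
    using u_in_P v_in_P u_less_v unfolding Z_def inner_def by auto
  ultimately have "Z \<in> MC" unfolding max_chains_def by blast
  moreover have "y \<in> Z" using y unfolding Z_def by auto
  ultimately show ?thesis by blast
qed

lemma max_chain_unique:
  assumes Z: "Z \<in> MC" and Z': "Z' \<in> MC" and y: "y \<in> Z" "y \<in> Z'" "inner y"
  shows "Z = Z'"
proof -
  have "Z1 \<subseteq> Z2" if "Z1 \<in> MC" "Z2 \<in> MC" "y \<in> Z1" "y \<in> Z2" for Z1 Z2
  proof
    fix a assume a: "a \<in> Z1"
    have "a \<le> y \<or> y \<le> a" using max_chainsD(2)[OF that(1)] a that(3) unfolding is_chain_def by blast
    then show "a \<in> Z2"
      using max_chain_cases[OF that(1) a] u_in_max_chain v_in_max_chain
        max_chain_comparable_closed[OF that(2,4) y(3)] that(2) by blast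
  qed
  then show ?thesis using assms by blast
qed

definition chain_of :: "'a \<Rightarrow> 'a set" where
  "chain_of y = (THE Z. Z \<in> MC \<and> y \<in> Z)"

lemma chain_of: "inner y \<Longrightarrow> chain_of y \<in> MC \<and> y \<in> chain_of y"
  unfolding chain_of_def by (rule theI') (use max_chain_through max_chain_unique in blast)

lemma chain_of_eq: "Z \<in> MC \<Longrightarrow> y \<in> Z \<Longrightarrow> inner y \<Longrightarrow> chain_of y = Z"
  using chain_of max_chain_unique by blast

lemma chain_of_comparable: "inner y \<Longrightarrow> inner y' \<Longrightarrow> y \<le> y' \<Longrightarrow> chain_of y = chain_of y'"
  using chain_of[of y] max_chain_comparable_closed[of "chain_of y" y y']
    chain_of_eq[of "chain_of y" y']
  by blast

section \<open>The category \<open>C(P,u,v)\<close>\<close>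

abbreviation K :: "'a celt cat" where
  "K \<equiv> Cpuv P u v"

lemma Iv_in_arr: "Iv x y \<in> arr K \<longleftrightarrow> x \<in> P \<and> y \<in> P \<and> x \<le> y \<and> (x, y) \<noteq> (u, v)"
  by (auto simp: Cpuv_def)

lemma Ch_in_arr: "Ch Z \<in> arr K \<longleftrightarrow> Z \<in> MC"
  by (auto simp: Cpuv_def)

lemma Cpuv_simps [simp]:
  "src K (Iv x y) = Iv x x" "src K (Ch Z) = Iv u u"
  "tgt K (Iv x y) = Iv y y" "tgt K (Ch Z) = Iv v v"
  "cmp K (Iv x y) (Iv y' z) = (if x = u \<and> z = v then Ch (chain_of y) else Iv x z)"
  "cmp K (Iv x y) (Ch Z) = Ch Z" "cmp K (Ch Z) (Iv x y) = Ch Z" "cmp K (Ch Z) (Ch W) = Ch Z"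
  by (simp_all add: Cpuv_def chain_of_def)

lemma u_Iv_in_arr: "Iv u u \<in> arr K" and v_Iv_in_arr: "Iv v v \<in> arr K"
  using u_in_P v_in_P u_less_v by (auto simp: Iv_in_arr)

lemma composable_Iv_Iv: "composable K (Iv a b) (Iv c d) \<longleftrightarrow> Iv a b \<in> arr K \<and> Iv c d \<in> arr K \<and> b = c"
  by (auto simp: composable_def)

lemma composable_Iv_Ch: "composable K (Iv a b) (Ch Z) \<longleftrightarrow> a = u \<and> b = u \<and> Z \<in> MC"
  using u_minimal u_Iv_in_arr by (auto simp: composable_def Iv_in_arr Ch_in_arr)

lemma composable_Ch_Iv: "composable K (Ch Z) (Iv a b) \<longleftrightarrow> Z \<in> MC \<and> a = v \<and> b = v"
  using v_maximal v_Iv_in_arr by (auto simp: composable_def Iv_in_arr Ch_in_arr)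

lemma not_composable_Ch_Ch: "\<not> composable K (Ch Z) (Ch W)"
  using u_less_v by (auto simp: composable_def)

lemmas composable_Cpuv = composable_Iv_Iv composable_Iv_Ch composable_Ch_Iv not_composable_Ch_Ch

lemma is_identity_Cpuv: "is_identity K e \<longleftrightarrow> (\<exists>x\<in>P. e = Iv x x)"
  using u_less_v by (cases e) (auto simp: is_identity_def Iv_in_arr)

lemma inner_middle: "Iv u b \<in> arr K \<Longrightarrow> Iv b v \<in> arr K \<Longrightarrow> inner b"
  unfolding Iv_in_arr inner_def by (auto simp: order.order_iff_strict)

lemma cmp_Iv_Iv_in_arr:
  assumes "Iv a b \<in> arr K" "Iv b c \<in> arr K"
  shows "cmp K (Iv a b) (Iv b c) \<in> arr K"
proof (cases "a = u \<and> c = v")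
  case True
  then show ?thesis
    using chain_of[OF inner_middle] assms by (simp add: Ch_in_arr)
next
  case False
  then show ?thesis
    using assms by (auto simp: Iv_in_arr intro: order_trans)
qed

lemma cmp_assoc_Iv:
  assumes ab: "Iv a b \<in> arr K" and bc: "Iv b c \<in> arr K" and cd: "Iv c d \<in> arr K"
  shows "cmp K (cmp K (Iv a b) (Iv b c)) (Iv c d) = cmp K (Iv a b) (cmp K (Iv b c) (Iv c d))"
proof (cases "a = u \<and> c = v")
  case True
  then have "d = v" "b \<noteq> u"
    using assms v_maximal by (auto simp: Iv_in_arr)
  then show ?thesis using True by simp
next
  case not_ac: False
  show ?thesis
  proof (cases "b = u \<and> d = v")
    case True
    then have "a = u"
      using ab u_minimal by (auto simp: Iv_in_arr)
    then show ?thesis using True not_ac by simp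
  next
    case not_bd: False
    have "chain_of b = chain_of c" if "a = u" "d = v"
    proof (rule chain_of_comparable)
      show "inner b" "inner c" "b \<le> c"
        using assms that not_ac not_bd unfolding Iv_in_arr inner_def
        by (auto simp: order.order_iff_strict intro: order.strict_trans1 order.strict_trans2)
    qed
    then show ?thesis using not_ac not_bd by simp
  qed
qed

lemma category_Cpuv: "category K"
  unfolding category_def
proof (intro conjI ballI allI impI)
  fix x assume x: "x \<in> arr K"
  show "src K x \<in> arr K" "tgt K x \<in> arr K"
    using x u_Iv_in_arr v_Iv_in_arr u_less_v by (cases x; auto simp: Iv_in_arr)+
  show "src K (src K x) = src K x" "tgt K (src K x) = src K x" "src K (tgt K x) = tgt K x"
    "tgt K (tgt K x) = tgt K x"
    by (cases x; simp)+
  show "cmp K (src K x) x = x" "cmp K x (tgt K x) = x"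
    using x by (cases x; auto simp: Iv_in_arr)+
next
  fix x y assume "composable K x y"
  then show "cmp K x y \<in> arr K" "src K (cmp K x y) = src K x" "tgt K (cmp K x y) = tgt K y"
    using cmp_Iv_Iv_in_arr by (cases x; cases y; auto simp: composable_Cpuv Ch_in_arr)+
next
  fix x y z assume "composable K x y \<and> composable K y z"
  then show "cmp K (cmp K x y) z = cmp K x (cmp K y z)"
    using cmp_assoc_Iv u_less_v by (cases x; cases y; cases z) (auto simp: composable_Cpuv)
qed

lemma conical_Cpuv: "conical K"
  unfolding conical_def
proof (intro allI impI)
  fix x y assume "composable K x y \<and> is_identity K (cmp K x y)"
  then show "is_identity K x"
    by (cases x; cases y) (auto simp: composable_Cpuv is_identity_Cpuv Iv_in_arr split: if_splits
        intro: order.antisym)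
qed

lemma left_cancellative_Cpuv: "left_cancellative K"
  unfolding left_cancellative_def
proof (intro allI impI)
  fix a x y assume "composable K a x \<and> composable K a y \<and> cmp K a x = cmp K a y"
  then show "x = y"
    using u_less_v
    by (cases a; cases x; cases y) (auto simp: composable_Cpuv Iv_in_arr split: if_splits)
qed

lemma right_cancellative_Cpuv: "right_cancellative K"
  unfolding right_cancellative_def
proof (intro allI impI)
  fix a x y assume "composable K x a \<and> composable K y a \<and> cmp K x a = cmp K y a"
  then show "x = y"
    using u_less_v
    by (cases a; cases x; cases y) (auto simp: composable_Cpuv Iv_in_arr split: if_splits)
qed

lemma ldiv_Iv_iff:
  assumes "Iv x y \<in> arr K"
  shows "ldiv K c (Iv x y) \<longleftrightarrow> (\<exists>w. c = Iv x w \<and> w \<in> P \<and> x \<le> w \<and> w \<le> y)"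
proof
  assume "ldiv K c (Iv x y)"
  then obtain d where "composable K c d" "Iv x y = cmp K c d"
    unfolding ldiv_def by blast
  then show "\<exists>w. c = Iv x w \<and> w \<in> P \<and> x \<le> w \<and> w \<le> y"
    by (cases c; cases d) (auto simp: composable_Cpuv Iv_in_arr split: if_splits)
next
  assume "\<exists>w. c = Iv x w \<and> w \<in> P \<and> x \<le> w \<and> w \<le> y"
  then obtain w where w: "c = Iv x w" "w \<in> P" "x \<le> w" "w \<le> y" by blast
  then have "composable K (Iv x w) (Iv w y)" "cmp K (Iv x w) (Iv w y) = Iv x y"
    using assms u_minimal v_maximal order_trans[of v w y] order_trans[of x w u]
    by (auto simp: composable_Cpuv Iv_in_arr)
  then show "ldiv K c (Iv x y)"
    unfolding ldiv_def using w(1) by metis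
qed

lemma rdiv_Iv_iff:
  assumes "Iv x y \<in> arr K"
  shows "rdiv K c (Iv x y) \<longleftrightarrow> (\<exists>w. c = Iv w y \<and> w \<in> P \<and> x \<le> w \<and> w \<le> y)"
proof
  assume "rdiv K c (Iv x y)"
  then obtain d where "composable K d c" "Iv x y = cmp K d c"
    unfolding rdiv_def by blast
  then show "\<exists>w. c = Iv w y \<and> w \<in> P \<and> x \<le> w \<and> w \<le> y"
    by (cases c; cases d) (auto simp: composable_Cpuv Iv_in_arr split: if_splits)
next
  assume "\<exists>w. c = Iv w y \<and> w \<in> P \<and> x \<le> w \<and> w \<le> y"
  then obtain w where w: "c = Iv w y" "w \<in> P" "x \<le> w" "w \<le> y" by blast
  then have "composable K (Iv x w) (Iv w y)" "cmp K (Iv x w) (Iv w y) = Iv x y"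
    using assms u_minimal v_maximal order_trans[of v w y] order_trans[of x w u]
    by (auto simp: composable_Cpuv Iv_in_arr)
  then show "rdiv K c (Iv x y)"
    unfolding rdiv_def using w(1) by metis
qed

lemma ldiv_Ch_iff:
  assumes Z: "Z \<in> MC"
  shows "ldiv K c (Ch Z) \<longleftrightarrow> c = Ch Z \<or> (\<exists>w\<in>Z. w \<noteq> v \<and> c = Iv u w)"
proof
  assume "ldiv K c (Ch Z)"
  then obtain d where d: "composable K c d" "Ch Z = cmp K c d"
    unfolding ldiv_def by blast
  show "c = Ch Z \<or> (\<exists>w\<in>Z. w \<noteq> v \<and> c = Iv u w)"
  proof (cases c)
    case (Iv a b)
    then show ?thesis
      using d u_in_max_chain[OF Z] u_less_v chain_of[OF inner_middle] unfolding inner_def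
      by (cases d) (auto simp: composable_Cpuv Iv_in_arr split: if_splits)
  qed (use d in \<open>cases d; simp add: composable_Cpuv\<close>)
next
  assume "c = Ch Z \<or> (\<exists>w\<in>Z. w \<noteq> v \<and> c = Iv u w)"
  then consider "c = Ch Z" | "c = Iv u u" | w where "w \<in> Z" "inner w" "c = Iv u w"
    using max_chain_cases[OF Z] by blast
  then show "ldiv K c (Ch Z)"
  proof cases
    case 3
    then have "composable K (Iv u w) (Iv w v)" "cmp K (Iv u w) (Iv w v) = Ch Z"
      using u_in_P v_in_P chain_of_eq[OF Z] by (auto simp: composable_Cpuv Iv_in_arr inner_def)
    then show ?thesis
      unfolding ldiv_def using 3 by metis
  qed (use Z in \<open>auto simp: ldiv_def composable_Cpuv intro: exI[of _ "Iv v v"] exI[of _ "Ch Z"]\<close>)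
qed

lemma rdiv_Ch_iff:
  assumes Z: "Z \<in> MC"
  shows "rdiv K c (Ch Z) \<longleftrightarrow> c = Ch Z \<or> (\<exists>w\<in>Z. w \<noteq> u \<and> c = Iv w v)"
proof
  assume "rdiv K c (Ch Z)"
  then obtain d where d: "composable K d c" "Ch Z = cmp K d c"
    unfolding rdiv_def by blast
  show "c = Ch Z \<or> (\<exists>w\<in>Z. w \<noteq> u \<and> c = Iv w v)"
  proof (cases c)
    case (Iv a b)
    then show ?thesis
      using d v_in_max_chain[OF Z] u_less_v chain_of[OF inner_middle] unfolding inner_def
      by (cases d) (auto simp: composable_Cpuv Iv_in_arr split: if_splits)
  qed (use d in \<open>cases d; simp add: composable_Cpuv\<close>)
next
  assume "c = Ch Z \<or> (\<exists>w\<in>Z. w \<noteq> u \<and> c = Iv w v)"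
  then consider "c = Ch Z" | "c = Iv v v" | w where "w \<in> Z" "inner w" "c = Iv w v"
    using max_chain_cases[OF Z] by blast
  then show "rdiv K c (Ch Z)"
  proof cases
    case 3
    then have "composable K (Iv u w) (Iv w v)" "cmp K (Iv u w) (Iv w v) = Ch Z"
      using u_in_P v_in_P chain_of_eq[OF Z] by (auto simp: composable_Cpuv Iv_in_arr inner_def)
    then show ?thesis
      unfolding rdiv_def using 3 by metis
  qed (use Z in \<open>auto simp: rdiv_def composable_Cpuv intro: exI[of _ "Iv u u"] exI[of _ "Ch Z"]\<close>)
qed

lemma max_chain_Int:
  assumes "Z \<in> MC" "W \<in> MC" "Z \<noteq> W"
  shows "Z \<inter> W = {u, v}"
  using assms max_chain_cases max_chain_unique u_in_max_chain v_in_max_chain by blast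

lemma common_ldiv_Iv_Ch_iff:
  assumes "Iv u y \<in> arr K" "Z \<in> MC"
  shows "ldiv K c (Iv u y) \<and> ldiv K c (Ch Z) \<longleftrightarrow> (\<exists>w\<in>Z. w \<le> y \<and> w \<noteq> v \<and> c = Iv u w)"
  unfolding ldiv_Iv_iff[OF assms(1)] ldiv_Ch_iff[OF assms(2)]
  using max_chain_mem[OF assms(2)] by blast

lemma common_rdiv_Iv_Ch_iff:
  assumes "Iv x v \<in> arr K" "Z \<in> MC"
  shows "rdiv K c (Iv x v) \<and> rdiv K c (Ch Z) \<longleftrightarrow> (\<exists>w\<in>Z. x \<le> w \<and> w \<noteq> u \<and> c = Iv w v)"
  unfolding rdiv_Iv_iff[OF assms(1)] rdiv_Ch_iff[OF assms(2)]
  using max_chain_mem[OF assms(2)] by blast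

end

locale gcd_extreme_spindle_category = extreme_spindle_category +
  assumes gcd_category_poset: "gcd_category (poset_cat P)"
begin

lemma interval_meet:
  "x \<in> P \<Longrightarrow> y \<in> P \<Longrightarrow> z \<in> P \<Longrightarrow> x \<le> y \<Longrightarrow> x \<le> z \<Longrightarrow> \<exists>w. is_glb {w\<in>P. x \<le> w} (\<le>) y z w"
  using poset_meet gcd_category_poset unfolding gcd_category_def by blast

lemma interval_join:
  "x \<in> P \<Longrightarrow> y \<in> P \<Longrightarrow> z \<in> P \<Longrightarrow> y \<le> x \<Longrightarrow> z \<le> x \<Longrightarrow> \<exists>w. is_glb {w\<in>P. w \<le> x} (\<ge>) y z w"
  using poset_join gcd_category_poset unfolding gcd_category_def by blast

lemma greatest_in_max_chain_below:
  assumes Z: "Z \<in> MC" and y: "y \<in> P" "u \<le> y" "y \<noteq> v"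
  shows "\<exists>m\<in>Z. m \<le> y \<and> m \<noteq> v \<and> (\<forall>w\<in>Z. w \<le> y \<and> w \<noteq> v \<longrightarrow> w \<le> m)"
proof -
  obtain m where m: "is_glb {w\<in>P. u \<le> w} (\<le>) y v m"
    using interval_meet[OF u_in_P y(1) v_in_P y(2) order.strict_implies_order[OF u_less_v]] by blast
  then have m_below: "m \<in> P" "u \<le> m" "m \<le> y" "m \<le> v" "m \<noteq> v"
    using y v_maximal[OF y(1)] by (auto simp: is_glb_def)
  have m_greatest: "w \<le> m" if "w \<in> Z" "w \<le> y" for w
    using m that max_chain_mem[OF Z] unfolding is_glb_def by blast
  show ?thesis
  proof (cases "m \<in> Z")
    case True
    then show ?thesis using m_below m_greatest by blast
  next
    case False
    have only_u: "w = u" if "w \<in> Z" "w \<le> y" "w \<noteq> v" for w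
    proof (rule ccontr)
      assume "w \<noteq> u"
      then have "inner w" using max_chain_cases[OF Z that(1)] that(3) by blast
      moreover have "w \<le> m" using m_greatest that by blast
      ultimately have "inner m" using m_below unfolding inner_def by (auto intro: less_le_trans)
      then show False
        using False max_chain_comparable_closed[OF Z that(1) \<open>inner w\<close>] \<open>w \<le> m\<close> by blast
    qed
    then have "\<forall>w\<in>Z. w \<le> y \<and> w \<noteq> v \<longrightarrow> w \<le> u"
      by blast
    then show ?thesis
      using u_in_max_chain[OF Z] y(2) u_less_v by blast
  qed
qed

lemma least_in_max_chain_above:
  assumes Z: "Z \<in> MC" and x: "x \<in> P" "x \<le> v" "x \<noteq> u"
  shows "\<exists>m\<in>Z. x \<le> m \<and> m \<noteq> u \<and> (\<forall>w\<in>Z. x \<le> w \<and> w \<noteq> u \<longrightarrow> m \<le> w)"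
proof -
  obtain m where m: "is_glb {w\<in>P. w \<le> v} (\<ge>) x u m"
    using interval_join[OF v_in_P x(1) u_in_P x(2) order.strict_implies_order[OF u_less_v]] by blast
  then have m_above: "m \<in> P" "m \<le> v" "x \<le> m" "u \<le> m" "m \<noteq> u"
    using x u_minimal[OF x(1)] by (auto simp: is_glb_def)
  have m_least: "m \<le> w" if "w \<in> Z" "x \<le> w" for w
    using m that max_chain_mem[OF Z] unfolding is_glb_def by blast
  show ?thesis
  proof (cases "m \<in> Z")
    case True
    then show ?thesis using m_above m_least by blast
  next
    case False
    have only_v: "w = v" if "w \<in> Z" "x \<le> w" "w \<noteq> u" for w
    proof (rule ccontr)
      assume "w \<noteq> v"
      then have "inner w" using max_chain_cases[OF Z that(1)] that(3) by blast
      moreover have "m \<le> w" using m_least that by blast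
      ultimately have "inner m" using m_above unfolding inner_def by (auto intro: le_less_trans)
      then show False
        using False max_chain_comparable_closed[OF Z that(1) \<open>inner w\<close>] \<open>m \<le> w\<close> by blast
    qed
    then have "\<forall>w\<in>Z. x \<le> w \<and> w \<noteq> u \<longrightarrow> v \<le> w"
      by blast
    then show ?thesis
      using v_in_max_chain[OF Z] x(2) u_less_v by blast
  qed
qed

lemma left_glb_Iv_Iv:
  assumes a: "Iv x y \<in> arr K" and b: "Iv x z \<in> arr K"
  shows "\<exists>d. is_glb (arr K) (ldiv K) (Iv x y) (Iv x z) d"
proof -
  have "x \<in> P" "y \<in> P" "z \<in> P" "x \<le> y" "x \<le> z"
    using a b by (simp_all add: Iv_in_arr)
  then obtain w where w: "is_glb {w\<in>P. x \<le> w} (\<le>) y z w"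
    using interval_meet by blast
  then have d: "Iv x w \<in> arr K"
    using a v_maximal by (auto simp: Iv_in_arr is_glb_def)
  have "is_glb (arr K) (ldiv K) (Iv x y) (Iv x z) (Iv x w)"
    using w d unfolding is_glb_def ldiv_Iv_iff[OF a] ldiv_Iv_iff[OF b] ldiv_Iv_iff[OF d]
    by (auto intro: order_trans)
  then show ?thesis ..
qed

lemma right_glb_Iv_Iv:
  assumes a: "Iv x z \<in> arr K" and b: "Iv y z \<in> arr K"
  shows "\<exists>d. is_glb (arr K) (rdiv K) (Iv x z) (Iv y z) d"
proof -
  have "z \<in> P" "x \<in> P" "y \<in> P" "x \<le> z" "y \<le> z"
    using a b by (simp_all add: Iv_in_arr)
  then obtain w where w: "is_glb {w\<in>P. w \<le> z} (\<ge>) x y w"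
    using interval_join by blast
  then have d: "Iv w z \<in> arr K"
    using a u_minimal by (auto simp: Iv_in_arr is_glb_def)
  have "is_glb (arr K) (rdiv K) (Iv x z) (Iv y z) (Iv w z)"
    using w d unfolding is_glb_def rdiv_Iv_iff[OF a] rdiv_Iv_iff[OF b] rdiv_Iv_iff[OF d]
    by (auto intro: order_trans)
  then show ?thesis ..
qed

lemma left_glb_Iv_Ch:
  assumes a: "Iv u y \<in> arr K" and Z: "Z \<in> MC"
  shows "\<exists>d. is_glb (arr K) (ldiv K) (Iv u y) (Ch Z) d"
proof -
  have "y \<in> P" "u \<le> y" "y \<noteq> v" using a by (auto simp: Iv_in_arr)
  then obtain m where m: "m \<in> Z" "m \<le> y" "m \<noteq> v" "\<forall>w\<in>Z. w \<le> y \<and> w \<noteq> v \<longrightarrow> w \<le> m"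
    using greatest_in_max_chain_below[OF Z] by blast
  have d: "Iv u m \<in> arr K"
    using m max_chain_mem[OF Z] u_in_P by (auto simp: Iv_in_arr)
  have "is_glb (arr K) (ldiv K) (Iv u y) (Ch Z) (Iv u m)"
  proof (rule is_glbI)
    show "ldiv K (Iv u m) (Iv u y)" "ldiv K (Iv u m) (Ch Z)"
      using m max_chain_mem[OF Z] by (auto simp: ldiv_Iv_iff[OF a] ldiv_Ch_iff[OF Z])
    fix c assume "c \<in> arr K" "ldiv K c (Iv u y)" "ldiv K c (Ch Z)"
    then obtain w where "w \<in> Z" "w \<le> y" "w \<noteq> v" "c = Iv u w"
      using common_ldiv_Iv_Ch_iff[OF a Z] by blast
    then show "ldiv K c (Iv u m)"
      using m max_chain_mem[OF Z] by (auto simp: ldiv_Iv_iff[OF d])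
  qed (rule d)
  then show ?thesis ..
qed

lemma right_glb_Iv_Ch:
  assumes a: "Iv x v \<in> arr K" and Z: "Z \<in> MC"
  shows "\<exists>d. is_glb (arr K) (rdiv K) (Iv x v) (Ch Z) d"
proof -
  have "x \<in> P" "x \<le> v" "x \<noteq> u" using a by (auto simp: Iv_in_arr)
  then obtain m where m: "m \<in> Z" "x \<le> m" "m \<noteq> u" "\<forall>w\<in>Z. x \<le> w \<and> w \<noteq> u \<longrightarrow> m \<le> w"
    using least_in_max_chain_above[OF Z] by blast
  have d: "Iv m v \<in> arr K"
    using m max_chain_mem[OF Z] v_in_P by (auto simp: Iv_in_arr)
  have "is_glb (arr K) (rdiv K) (Iv x v) (Ch Z) (Iv m v)"
  proof (rule is_glbI)
    show "rdiv K (Iv m v) (Iv x v)" "rdiv K (Iv m v) (Ch Z)"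
      using m max_chain_mem[OF Z] by (auto simp: rdiv_Iv_iff[OF a] rdiv_Ch_iff[OF Z])
    fix c assume "c \<in> arr K" "rdiv K c (Iv x v)" "rdiv K c (Ch Z)"
    then obtain w where "w \<in> Z" "x \<le> w" "w \<noteq> u" "c = Iv w v"
      using common_rdiv_Iv_Ch_iff[OF a Z] by blast
    then show "rdiv K c (Iv m v)"
      using m max_chain_mem[OF Z] by (auto simp: rdiv_Iv_iff[OF d])
  qed (rule d)
  then show ?thesis ..
qed

lemma left_glb_Ch_Ch:
  assumes Z: "Z \<in> MC" and W: "W \<in> MC"
  shows "\<exists>d. is_glb (arr K) (ldiv K) (Ch Z) (Ch W) d"
proof (cases "Z = W")
  case True
  have "is_glb (arr K) (ldiv K) (Ch Z) (Ch W) (Ch Z)"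
    using Z True by (intro is_glbI) (simp_all add: Ch_in_arr ldiv_Ch_iff)
  then show ?thesis ..
next
  case False
  have "is_glb (arr K) (ldiv K) (Ch Z) (Ch W) (Iv u u)"
  proof (rule is_glbI)
    show "ldiv K (Iv u u) (Ch Z)" "ldiv K (Iv u u) (Ch W)"
      using Z W u_in_max_chain u_less_v by (auto simp: ldiv_Ch_iff)
    fix c assume "c \<in> arr K" "ldiv K c (Ch Z)" "ldiv K c (Ch W)"
    then have "c = Iv u u"
      using max_chain_Int[OF Z W False] False by (auto simp: ldiv_Ch_iff[OF Z] ldiv_Ch_iff[OF W])
    then show "ldiv K c (Iv u u)"
      using u_in_P by (simp add: ldiv_Iv_iff[OF u_Iv_in_arr])
  qed (rule u_Iv_in_arr)
  then show ?thesis ..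
qed

lemma right_glb_Ch_Ch:
  assumes Z: "Z \<in> MC" and W: "W \<in> MC"
  shows "\<exists>d. is_glb (arr K) (rdiv K) (Ch Z) (Ch W) d"
proof (cases "Z = W")
  case True
  have "is_glb (arr K) (rdiv K) (Ch Z) (Ch W) (Ch Z)"
    using Z True by (intro is_glbI) (simp_all add: Ch_in_arr rdiv_Ch_iff)
  then show ?thesis ..
next
  case False
  have "is_glb (arr K) (rdiv K) (Ch Z) (Ch W) (Iv v v)"
  proof (rule is_glbI)
    show "rdiv K (Iv v v) (Ch Z)" "rdiv K (Iv v v) (Ch W)"
      using Z W v_in_max_chain u_less_v by (auto simp: rdiv_Ch_iff)
    fix c assume "c \<in> arr K" "rdiv K c (Ch Z)" "rdiv K c (Ch W)"
    then have "c = Iv v v"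
      using max_chain_Int[OF Z W False] False by (auto simp: rdiv_Ch_iff[OF Z] rdiv_Ch_iff[OF W])
    then show "rdiv K c (Iv v v)"
      using v_in_P by (simp add: rdiv_Iv_iff[OF v_Iv_in_arr])
  qed (rule v_Iv_in_arr)
  then show ?thesis ..
qed

lemma has_left_gcds_Cpuv: "has_left_gcds K"
  unfolding has_left_gcds_iff_is_glb
proof (intro ballI impI)
  fix a b assume ab: "a \<in> arr K" "b \<in> arr K" "src K a = src K b"
  show "\<exists>d. is_glb (arr K) (ldiv K) a b d"
  proof (cases a)
    case (Iv x y)
    show ?thesis
    proof (cases b)
      case (Iv x' z)
      then show ?thesis using ab \<open>a = Iv x y\<close> left_glb_Iv_Iv by simp
    next
      case (Ch Z)
      then show ?thesis using ab \<open>a = Iv x y\<close> left_glb_Iv_Ch by (simp add: Ch_in_arr)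
    qed
  next
    case (Ch Z)
    show ?thesis
    proof (cases b)
      case (Iv x z)
      then show ?thesis
        using ab \<open>a = Ch Z\<close> left_glb_Iv_Ch[of z Z] by (simp add: Ch_in_arr is_glb_commute)
    next
      case (Ch W)
      then show ?thesis using ab \<open>a = Ch Z\<close> left_glb_Ch_Ch by (simp add: Ch_in_arr)
    qed
  qed
qed

lemma has_right_gcds_Cpuv: "has_right_gcds K"
  unfolding has_right_gcds_iff_is_glb
proof (intro ballI impI)
  fix a b assume ab: "a \<in> arr K" "b \<in> arr K" "tgt K a = tgt K b"
  show "\<exists>d. is_glb (arr K) (rdiv K) a b d"
  proof (cases a)
    case (Iv x y)
    show ?thesis
    proof (cases b)
      case (Iv x' y')
      then show ?thesis using ab \<open>a = Iv x y\<close> right_glb_Iv_Iv by simp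
    next
      case (Ch Z)
      then show ?thesis using ab \<open>a = Iv x y\<close> right_glb_Iv_Ch by (simp add: Ch_in_arr)
    qed
  next
    case (Ch Z)
    show ?thesis
    proof (cases b)
      case (Iv x z)
      then show ?thesis
        using ab \<open>a = Ch Z\<close> right_glb_Iv_Ch[of x Z] by (simp add: Ch_in_arr is_glb_commute)
    next
      case (Ch W)
      then show ?thesis using ab \<open>a = Ch Z\<close> right_glb_Ch_Ch by (simp add: Ch_in_arr)
    qed
  qed
qed

lemma gcd_category_Cpuv: "gcd_category K"
  unfolding gcd_category_def
  using category_Cpuv conical_Cpuv left_cancellative_Cpuv right_cancellative_Cpuv
    has_left_gcds_Cpuv has_right_gcds_Cpuv
  by blast

end

theorem proposition9p5:
  fixes P :: "'a::order set" and u v :: 'a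
  assumes "gcd_monoid (interval_monoid P)"
    and "extreme_spindle P u v"
  shows "gcd_category (Cpuv P u v) \<and> gcd_monoid (umon (Cpuv P u v))"
proof -
  interpret gcd_extreme_spindle_category P u v
    using assms by unfold_locales (simp_all add: gcd_category_poset_cat)
  show ?thesis
    using gcd_category_Cpuv gcd_monoid_umon by blast
qed

end
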